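(* In a generalised differential Seely category, for every $X\in\mathscr C$ and $A\in\mathcal L$, the chain rule holds in the fibre over $X$: $\partial^X_A;\mathbf p^X_A=(\mathbf c^X_A\otimes_X\mathrm{id}_{(X,A)});(\mathbf p^X_A\otimes_X\partial^X_A);\partial^X_{!A}$.
   Context: Composition is diagrammatic; monoidal categories are strict. Setting: an LNL adjunction $\mathcal F\dashv\mathcal U$, $\mathcal F:\mathscr C\to\mathcal L$, between cartesian $(\mathscr C,\times,I)$ and symmetric monoidal $(\mathcal L,\otimes,1)$ (symmetry $\sigma$); $\mathcal U$ lax monoidal via $n_{A,B}$; $\mathcal F$ strong monoidal via isomorphisms $m_{X,Y}:\mathcal F(X)\otimes\mathcal F(Y)\to\mathcal F(X\times Y)$, $m_1$; unit $\eta$, comonad $!=\mathcal F\mathcal U$ with comultiplication $\mathbf p$; $\mathbf c_X:=\mathcal F(\Delta_X);m_{X,X}^{-1}$, $\mathbf w_X:=\mathcal F(t_X);m_1^{-1}$; $\mathbf c_A:=\mathbf c_{\mathcal U(A)}$, $\mathbf w_A:=\mathbf w_{\mathcal U(A)}$. $LS(\mathscr C)$: objects $(X,A)$; morphisms $(f,u):(X,A)\to(Y,B)$ with $f:X\to Y$, $u:\mathcal F(X)\otimes A\to B$; composition $(f,u);(g,v)=(f;g,(\mathbf c_X\otimes\mathrm{id}_A);(\mathcal F(f)\otimes u);v)$; identity $(\mathrm{id}_X,\mathbf w_X\otimes\mathrm{id}_A)$; $\mathbf{ls}(f,u)=f$; fibre $LS(\mathscr C)_X$ = morphisms $(\mathrm{id}_X,u)$,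 with $(X,A)\otimes_X(X,B)=(X,A\otimes B)$ and $(\mathrm{id}_X,u)\otimes_X(\mathrm{id}_X,v)=(\mathrm{id}_X,(\mathbf c_X\otimes\mathrm{id});(\mathrm{id}\otimes\sigma_{\mathcal F(X),A}\otimes\mathrm{id});(u\otimes v))$. With biproducts $\oplus$ in $\mathcal L$: fibrewise injections $\iota^X_i=(\mathrm{id}_X,\mathbf w_X\otimes\iota_i)$; products in $LS(\mathscr C)$: $(X\times Y,A\oplus B)$, projections $(\pi_i,\mathbf w_{X\times Y}\otimes\pi_i)$. GDSC: $\mathcal L$ additive (CMon-enriched, $\otimes$ bilinear) with finite products, and $\mathcal T:\mathscr C\to LS(\mathscr C)$ with: (t.1) $\mathbf{ls}\circ\mathcal T=\mathrm{id}$, $\mathcal T(X)=(X,\lambda(X))$, and $\varphi_{X,Y}:=\langle\mathcal T(\pi_1),\mathcal T(\pi_2)\rangle:\mathcal T(X\times Y)\to(X\times Y,\lambda(X)\oplus\lambda(Y))$ iso; (t.2) $\mathcal T(\mathcal U(A))=(\mathcal U(A),A)$; (t.3) with $i^{X,Y}_2:=\iota^{X\times Y}_2;\varphi^{-1}_{X,Y}$, $⦃(f,u)⦄:=\langle\pi_1;f,(\eta_X\times\mathrm{id});n_{\mathcal F(X),A};\mathcal U(u)\rangle$, $W(f,u):=(⦃(f,u)⦄,(\mathcal F(\pi_1)\otimes\mathrm{id}_A);u)$: $W(f,u);i^{Y,\mathcal U(B)}_2=i^{X,\mathcal U(A)}_2;\mathcal T(⦃(f,u)⦄)$. Differential: for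 $h:X\to Y$ with $\mathcal T(h)=(h,v)$, $\mathrm D(h):=(\mathrm{id}_X,v)$; for $h:X\times Y\to Z$, $\mathrm D_2(h):=i^{X,Y}_2;\mathrm D(h)$. $\mathscr D^X_A:=\mathrm D_2(\pi_2;\eta_{\mathcal U(A)}):(X\times\mathcal U(A),A)\to(X\times\mathcal U(A),!A)$. $\Sigma_{(X,A)}:LS(\mathscr C)_{X\times\mathcal U(A)}\to LS(\mathscr C)_X$: $(X\times\mathcal U(A),B)\mapsto(X,!A\otimes B)$, $(\mathrm{id},u)\mapsto(\mathrm{id}_X,(\mathrm{id}_{\mathcal F(X)}\otimes\mathbf c_A\otimes\mathrm{id}_B);(\sigma_{\mathcal F(X),!A}\otimes\mathrm{id}_{!A\otimes B});(\mathrm{id}_{!A}\otimes((m_{X,\mathcal U(A)}\otimes\mathrm{id}_B);u)))$. $\mu^{(X,A)}_{(X,B)}:=(\mathrm{id}_X,\mathbf w_X\otimes\mathbf w_A\otimes\mathrm{id}_B)$. Deriving transform: $\partial^X_A:=\Sigma_{(X,A)}(\mathscr D^X_A);\mu^{(X,A)}_{(X,!A)}:(X,!A\otimes A)\to(X,!A)$. Fibrewise structure: $\mathbf p^X_A:=(\mathrm{id}_X,\mathbf w_X\otimes\mathbf p_A):(X,!A)\to(X,!!A)$, $\mathbf c^X_A:=(\mathrm{id}_X,\mathbf w_X\otimes\mathbf c_A):(X,!A)\to(X,!A\otimes!A)$. *)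

theory Defs
  imports Main
begin

(* Categories: objects = all elements of a type, morphisms = elements of a
   type with explicit hom-sets; composition is DIAGRAMMATIC: cmp f g = f;g.
   'c / 'f : objects / morphisms of the cartesian category C
   'l / 'g : objects / morphisms of the symmetric monoidal category L
   =================================================================== *)

record ('c,'f,'l,'g) gdsc_data =
  cHom  :: "'c \<Rightarrow> 'c \<Rightarrow> 'f set"
  cId   :: "'c \<Rightarrow> 'f"
  cCmp  :: "'f \<Rightarrow> 'f \<Rightarrow> 'f"
  cPrd  :: "'c \<Rightarrow> 'c \<Rightarrow> 'c"
  cPr1  :: "'c \<Rightarrow> 'c \<Rightarrow> 'f"
  cPr2  :: "'c \<Rightarrow> 'c \<Rightarrow> 'f"
  cTup  :: "'f \<Rightarrow> 'f \<Rightarrow> 'f"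
  cTrm  :: "'c"
  cBang :: "'c \<Rightarrow> 'f"
  lHom  :: "'l \<Rightarrow> 'l \<Rightarrow> 'g set"
  lId   :: "'l \<Rightarrow> 'g"
  lCmp  :: "'g \<Rightarrow> 'g \<Rightarrow> 'g"
  lTen  :: "'l \<Rightarrow> 'l \<Rightarrow> 'l"
  lTenM :: "'g \<Rightarrow> 'g \<Rightarrow> 'g"
  lUnit :: "'l"
  lSym  :: "'l \<Rightarrow> 'l \<Rightarrow> 'g"
  lZero :: "'l \<Rightarrow> 'l \<Rightarrow> 'g"
  lPlus :: "'g \<Rightarrow> 'g \<Rightarrow> 'g"
  lBip  :: "'l \<Rightarrow> 'l \<Rightarrow> 'l"
  lBp1  :: "'l \<Rightarrow> 'l \<Rightarrow> 'g"
  lBp2  :: "'l \<Rightarrow> 'l \<Rightarrow> 'g"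
  lTup  :: "'g \<Rightarrow> 'g \<Rightarrow> 'g"
  lTrm  :: "'l"
  lBang :: "'l \<Rightarrow> 'g"
  FO    :: "'c \<Rightarrow> 'l"
  FM    :: "'f \<Rightarrow> 'g"
  UO    :: "'l \<Rightarrow> 'c"
  UM    :: "'g \<Rightarrow> 'f"
  adjEta :: "'c \<Rightarrow> 'f"
  adjEps :: "'l \<Rightarrow> 'g"
  mF    :: "'c \<Rightarrow> 'c \<Rightarrow> 'g"
  mFi   :: "'c \<Rightarrow> 'c \<Rightarrow> 'g"
  mF1   :: "'g"
  mF1i  :: "'g"
  nU    :: "'l \<Rightarrow> 'l \<Rightarrow> 'f"
  nU1   :: "'f"
  lam   :: "'c \<Rightarrow> 'l"
  TM    :: "'f \<Rightarrow> 'g"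

definition is_category :: "('o \<Rightarrow> 'o \<Rightarrow> 'm set) \<Rightarrow> ('o \<Rightarrow> 'm) \<Rightarrow> ('m \<Rightarrow> 'm \<Rightarrow> 'm) \<Rightarrow> bool" where
  "is_category hom idm cmp \<longleftrightarrow>
     (\<forall>X. idm X \<in> hom X X) \<and>
     (\<forall>X Y Z f g. f \<in> hom X Y \<longrightarrow> g \<in> hom Y Z \<longrightarrow> cmp f g \<in> hom X Z) \<and>
     (\<forall>X Y f. f \<in> hom X Y \<longrightarrow> cmp (idm X) f = f \<and> cmp f (idm Y) = f) \<and>
     (\<forall>W X Y Z f g h. f \<in> hom W X \<longrightarrow> g \<in> hom X Y \<longrightarrow> h \<in> hom Y Z \<longrightarrow>
        cmp (cmp f g) h = cmp f (cmp g h))"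

definition is_functor ::
  "('o \<Rightarrow> 'o \<Rightarrow> 'm set) \<Rightarrow> ('o \<Rightarrow> 'm) \<Rightarrow> ('m \<Rightarrow> 'm \<Rightarrow> 'm) \<Rightarrow>
   ('p \<Rightarrow> 'p \<Rightarrow> 'n set) \<Rightarrow> ('p \<Rightarrow> 'n) \<Rightarrow> ('n \<Rightarrow> 'n \<Rightarrow> 'n) \<Rightarrow>
   ('o \<Rightarrow> 'p) \<Rightarrow> ('m \<Rightarrow> 'n) \<Rightarrow> bool" where
  "is_functor hom idm cmp hom' idm' cmp' Fo Fm \<longleftrightarrow>
     (\<forall>X Y f. f \<in> hom X Y \<longrightarrow> Fm f \<in> hom' (Fo X) (Fo Y)) \<and>
     (\<forall>X. Fm (idm X) = idm' (Fo X)) \<and>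
     (\<forall>X Y Z f g. f \<in> hom X Y \<longrightarrow> g \<in> hom Y Z \<longrightarrow> Fm (cmp f g) = cmp' (Fm f) (Fm g))"

definition prodC where
  "prodC S X Y f g = cTup S (cCmp S (cPr1 S X Y) f) (cCmp S (cPr2 S X Y) g)"

definition assocC where
  "assocC S X Y Z =
     cTup S (cCmp S (cPr1 S (cPrd S X Y) Z) (cPr1 S X Y))
            (cTup S (cCmp S (cPr1 S (cPrd S X Y) Z) (cPr2 S X Y)) (cPr2 S (cPrd S X Y) Z))"

definition swapC where "swapC S X Y = cTup S (cPr2 S X Y) (cPr1 S X Y)"

definition diagC where "diagC S X = cTup S (cId S X) (cId S X)"

definition contr where "contr S X = lCmp S (FM S (diagC S X)) (mFi S X X)"
definition weak where "weak S X = lCmp S (FM S (cBang S X)) (mF1i S)"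

(* the exponential !A = F(U(A)) and its comultiplication p_A = F(eta_{U A}) *)
definition bangL where "bangL S A = FO S (UO S A)"
definition digL where "digL S A = FM S (adjEta S (UO S A))"

definition inj1 where "inj1 S A B = lTup S (lId S A) (lZero S A B)"
definition inj2 where "inj2 S A B = lTup S (lZero S B A) (lId S B)"

definition LShom where
  "LShom S P Q = {(f,u). f \<in> cHom S (fst P) (fst Q) \<and> u \<in> lHom S (lTen S (FO S (fst P)) (snd P)) (snd Q)}"

definition LScmp where
  "LScmp S P h k =
     (cCmp S (fst h) (fst k),
      lCmp S (lCmp S (lTenM S (contr S (fst P)) (lId S (snd P))) (lTenM S (FM S (fst h)) (snd h))) (snd k))"

definition LSid where "LSid S P = (cId S (fst P), lTenM S (weak S (fst P)) (lId S (snd P)))"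

definition LSiso where
  "LSiso S P Q h \<longleftrightarrow> h \<in> LShom S P Q \<and>
     (\<exists>k \<in> LShom S Q P. LScmp S P h k = LSid S P \<and> LScmp S Q k h = LSid S Q)"

definition LSinv where
  "LSinv S P Q h = (SOME k. k \<in> LShom S Q P \<and> LScmp S P h k = LSid S P \<and> LScmp S Q k h = LSid S Q)"

(* pairing into the product (X x Y, A (+) B) of LS(C), whose projections are (pi_i, w (x) pi_i) *)
definition LStup where "LStup S h k = (cTup S (fst h) (fst k), lTup S (snd h) (snd k))"

definition Tf where "Tf S h = (h, TM S h)"

definition phi where
  "phi S X Y = LStup S (Tf S (cPr1 S X Y)) (Tf S (cPr2 S X Y))"

definition iota2 where "iota2 S X A B = (cId S X, lTenM S (weak S X) (inj2 S A B))"

definition i2 where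
  "i2 S X Y =
     LScmp S (cPrd S X Y, lam S Y) (iota2 S (cPrd S X Y) (lam S X) (lam S Y))
       (LSinv S (cPrd S X Y, lam S (cPrd S X Y)) (cPrd S X Y, lBip S (lam S X) (lam S Y)) (phi S X Y))"

definition brace where
  "brace S X A f u =
     cTup S (cCmp S (cPr1 S X (UO S A)) f)
            (cCmp S (cCmp S (prodC S X (UO S A) (adjEta S X) (cId S (UO S A))) (nU S (FO S X) A)) (UM S u))"

definition Wmap where
  "Wmap S X A f u = (brace S X A f u, lCmp S (lTenM S (FM S (cPr1 S X (UO S A))) (lId S A)) u)"

definition Dm where "Dm S X h = (cId S X, TM S h)"

definition D2 where "D2 S X Y h = LScmp S (cPrd S X Y, lam S Y) (i2 S X Y) (Dm S (cPrd S X Y) h)"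

definition scrD where
  "scrD S X A = D2 S X (UO S A) (cCmp S (cPr2 S X (UO S A)) (adjEta S (UO S A)))"

definition SigmaX where
  "SigmaX S X A B h =
     (cId S X,
      lCmp S (lCmp S (lTenM S (lTenM S (lId S (FO S X)) (contr S (UO S A))) (lId S B))
                     (lTenM S (lSym S (FO S X) (bangL S A)) (lId S (lTen S (bangL S A) B))))
             (lTenM S (lId S (bangL S A)) (lCmp S (lTenM S (mF S X (UO S A)) (lId S B)) (snd h))))"

definition muX where
  "muX S X A B = (cId S X, lTenM S (lTenM S (weak S X) (weak S (UO S A))) (lId S B))"

definition derX where
  "derX S X A = LScmp S (X, lTen S (bangL S A) A) (SigmaX S X A A (scrD S X A)) (muX S X A (bangL S A))"

definition digX where "digX S X A = (cId S X, lTenM S (weak S X) (digL S A))"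
definition contrX where "contrX S X A = (cId S X, lTenM S (weak S X) (contr S (UO S A)))"

definition tenX where
  "tenX S X A B h k =
     (cId S X,
      lCmp S (lCmp S (lTenM S (contr S X) (lId S (lTen S A B)))
                     (lTenM S (lTenM S (lId S (FO S X)) (lSym S (FO S X) A)) (lId S B)))
             (lTenM S (snd h) (snd k)))"

definition cartesian_ax where
  "cartesian_ax S \<longleftrightarrow>
     is_category (cHom S) (cId S) (cCmp S) \<and>
     (\<forall>X Y. cPr1 S X Y \<in> cHom S (cPrd S X Y) X \<and> cPr2 S X Y \<in> cHom S (cPrd S X Y) Y) \<and>
     (\<forall>X Y Z f g. f \<in> cHom S Z X \<longrightarrow> g \<in> cHom S Z Y \<longrightarrow>
        cTup S f g \<in> cHom S Z (cPrd S X Y) \<and>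
        cCmp S (cTup S f g) (cPr1 S X Y) = f \<and> cCmp S (cTup S f g) (cPr2 S X Y) = g) \<and>
     (\<forall>X Y Z h. h \<in> cHom S Z (cPrd S X Y) \<longrightarrow>
        cTup S (cCmp S h (cPr1 S X Y)) (cCmp S h (cPr2 S X Y)) = h) \<and>
     (\<forall>X. cBang S X \<in> cHom S X (cTrm S)) \<and>
     (\<forall>X f. f \<in> cHom S X (cTrm S) \<longrightarrow> f = cBang S X)"

definition strict_smc_ax where
  "strict_smc_ax S \<longleftrightarrow>
     is_category (lHom S) (lId S) (lCmp S) \<and>
     (\<forall>A B C. lTen S (lTen S A B) C = lTen S A (lTen S B C)) \<and>
     (\<forall>A. lTen S (lUnit S) A = A \<and> lTen S A (lUnit S) = A) \<and>
     (\<forall>A B C D f g. f \<in> lHom S A B \<longrightarrow> g \<in> lHom S C D \<longrightarrow> lTenM S f g \<in> lHom S (lTen S A C) (lTen S B D)) \<and>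
     (\<forall>A B. lTenM S (lId S A) (lId S B) = lId S (lTen S A B)) \<and>
     (\<forall>A B C D E G f f' g g'. f \<in> lHom S A B \<longrightarrow> f' \<in> lHom S B C \<longrightarrow> g \<in> lHom S D E \<longrightarrow> g' \<in> lHom S E G \<longrightarrow>
        lTenM S (lCmp S f f') (lCmp S g g') = lCmp S (lTenM S f g) (lTenM S f' g')) \<and>
     (\<forall>A A' B B' C C' f g h. f \<in> lHom S A A' \<longrightarrow> g \<in> lHom S B B' \<longrightarrow> h \<in> lHom S C C' \<longrightarrow>
        lTenM S (lTenM S f g) h = lTenM S f (lTenM S g h)) \<and>
     (\<forall>A B f. f \<in> lHom S A B \<longrightarrow> lTenM S (lId S (lUnit S)) f = f \<and> lTenM S f (lId S (lUnit S)) = f) \<and>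
     (\<forall>A B. lSym S A B \<in> lHom S (lTen S A B) (lTen S B A)) \<and>
     (\<forall>A A' B B' f g. f \<in> lHom S A A' \<longrightarrow> g \<in> lHom S B B' \<longrightarrow>
        lCmp S (lTenM S f g) (lSym S A' B') = lCmp S (lSym S A B) (lTenM S g f)) \<and>
     (\<forall>A B. lCmp S (lSym S A B) (lSym S B A) = lId S (lTen S A B)) \<and>
     (\<forall>A. lSym S A (lUnit S) = lId S A) \<and>
     (\<forall>A B C. lSym S A (lTen S B C) = lCmp S (lTenM S (lSym S A B) (lId S C)) (lTenM S (lId S B) (lSym S A C))) \<and>
     (\<forall>A B C. lSym S (lTen S A B) C = lCmp S (lTenM S (lId S A) (lSym S B C)) (lTenM S (lSym S A C) (lId S B)))"

definition additive_ax where
  "additive_ax S \<longleftrightarrow>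
     (\<forall>A B. lZero S A B \<in> lHom S A B) \<and>
     (\<forall>A B f g. f \<in> lHom S A B \<longrightarrow> g \<in> lHom S A B \<longrightarrow> lPlus S f g \<in> lHom S A B \<and> lPlus S f g = lPlus S g f) \<and>
     (\<forall>A B f g h. f \<in> lHom S A B \<longrightarrow> g \<in> lHom S A B \<longrightarrow> h \<in> lHom S A B \<longrightarrow>
        lPlus S (lPlus S f g) h = lPlus S f (lPlus S g h)) \<and>
     (\<forall>A B f. f \<in> lHom S A B \<longrightarrow> lPlus S f (lZero S A B) = f) \<and>
     (\<forall>A B C f g h. f \<in> lHom S A B \<longrightarrow> g \<in> lHom S B C \<longrightarrow> h \<in> lHom S B C \<longrightarrow>
        lCmp S f (lPlus S g h) = lPlus S (lCmp S f g) (lCmp S f h)) \<and>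
     (\<forall>A B C f g h. g \<in> lHom S A B \<longrightarrow> h \<in> lHom S A B \<longrightarrow> f \<in> lHom S B C \<longrightarrow>
        lCmp S (lPlus S g h) f = lPlus S (lCmp S g f) (lCmp S h f)) \<and>
     (\<forall>A B C f. f \<in> lHom S A B \<longrightarrow> lCmp S f (lZero S B C) = lZero S A C) \<and>
     (\<forall>A B C f. f \<in> lHom S B C \<longrightarrow> lCmp S (lZero S A B) f = lZero S A C) \<and>
     (\<forall>A B C D f g h. f \<in> lHom S A B \<longrightarrow> g \<in> lHom S C D \<longrightarrow> h \<in> lHom S C D \<longrightarrow>
        lTenM S f (lPlus S g h) = lPlus S (lTenM S f g) (lTenM S f h)) \<and>
     (\<forall>A B C D f g h. g \<in> lHom S A B \<longrightarrow> h \<in> lHom S A B \<longrightarrow> f \<in> lHom S C D \<longrightarrow>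
        lTenM S (lPlus S g h) f = lPlus S (lTenM S g f) (lTenM S h f)) \<and>
     (\<forall>A B C D f. f \<in> lHom S A B \<longrightarrow> lTenM S f (lZero S C D) = lZero S (lTen S A C) (lTen S B D)) \<and>
     (\<forall>A B C D f. f \<in> lHom S C D \<longrightarrow> lTenM S (lZero S A B) f = lZero S (lTen S A C) (lTen S B D))"

definition products_L_ax where
  "products_L_ax S \<longleftrightarrow>
     (\<forall>A B. lBp1 S A B \<in> lHom S (lBip S A B) A \<and> lBp2 S A B \<in> lHom S (lBip S A B) B) \<and>
     (\<forall>A B C f g. f \<in> lHom S C A \<longrightarrow> g \<in> lHom S C B \<longrightarrow>
        lTup S f g \<in> lHom S C (lBip S A B) \<and>
        lCmp S (lTup S f g) (lBp1 S A B) = f \<and> lCmp S (lTup S f g) (lBp2 S A B) = g) \<and>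
     (\<forall>A B C h. h \<in> lHom S C (lBip S A B) \<longrightarrow>
        lTup S (lCmp S h (lBp1 S A B)) (lCmp S h (lBp2 S A B)) = h) \<and>
     (\<forall>A. lBang S A \<in> lHom S A (lTrm S)) \<and>
     (\<forall>A f. f \<in> lHom S A (lTrm S) \<longrightarrow> f = lBang S A)"

definition adjunction_ax where
  "adjunction_ax S \<longleftrightarrow>
     is_functor (cHom S) (cId S) (cCmp S) (lHom S) (lId S) (lCmp S) (FO S) (FM S) \<and>
     is_functor (lHom S) (lId S) (lCmp S) (cHom S) (cId S) (cCmp S) (UO S) (UM S) \<and>
     (\<forall>X. adjEta S X \<in> cHom S X (UO S (FO S X))) \<and>
     (\<forall>A. adjEps S A \<in> lHom S (FO S (UO S A)) A) \<and>
     (\<forall>X Y f. f \<in> cHom S X Y \<longrightarrow> cCmp S f (adjEta S Y) = cCmp S (adjEta S X) (UM S (FM S f))) \<and>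
     (\<forall>A B u. u \<in> lHom S A B \<longrightarrow> lCmp S (FM S (UM S u)) (adjEps S B) = lCmp S (adjEps S A) u) \<and>
     (\<forall>X. lCmp S (FM S (adjEta S X)) (adjEps S (FO S X)) = lId S (FO S X)) \<and>
     (\<forall>A. cCmp S (adjEta S (UO S A)) (UM S (adjEps S A)) = cId S (UO S A))"

definition F_strong_ax where
  "F_strong_ax S \<longleftrightarrow>
     (\<forall>X Y. mF S X Y \<in> lHom S (lTen S (FO S X) (FO S Y)) (FO S (cPrd S X Y)) \<and>
            mFi S X Y \<in> lHom S (FO S (cPrd S X Y)) (lTen S (FO S X) (FO S Y)) \<and>
            lCmp S (mF S X Y) (mFi S X Y) = lId S (lTen S (FO S X) (FO S Y)) \<and>
            lCmp S (mFi S X Y) (mF S X Y) = lId S (FO S (cPrd S X Y))) \<and>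
     mF1 S \<in> lHom S (lUnit S) (FO S (cTrm S)) \<and> mF1i S \<in> lHom S (FO S (cTrm S)) (lUnit S) \<and>
     lCmp S (mF1 S) (mF1i S) = lId S (lUnit S) \<and> lCmp S (mF1i S) (mF1 S) = lId S (FO S (cTrm S)) \<and>
     (\<forall>X X' Y Y' f g. f \<in> cHom S X X' \<longrightarrow> g \<in> cHom S Y Y' \<longrightarrow>
        lCmp S (lTenM S (FM S f) (FM S g)) (mF S X' Y') = lCmp S (mF S X Y) (FM S (prodC S X Y f g))) \<and>
     (\<forall>X Y Z. lCmp S (lCmp S (lTenM S (mF S X Y) (lId S (FO S Z))) (mF S (cPrd S X Y) Z)) (FM S (assocC S X Y Z))
               = lCmp S (lTenM S (lId S (FO S X)) (mF S Y Z)) (mF S X (cPrd S Y Z))) \<and>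
     (\<forall>X. lCmp S (lCmp S (lTenM S (mF1 S) (lId S (FO S X))) (mF S (cTrm S) X)) (FM S (cPr2 S (cTrm S) X))
            = lId S (FO S X)) \<and>
     (\<forall>X. lCmp S (lCmp S (lTenM S (lId S (FO S X)) (mF1 S)) (mF S X (cTrm S))) (FM S (cPr1 S X (cTrm S)))
            = lId S (FO S X)) \<and>
     (\<forall>X Y. lCmp S (lSym S (FO S X) (FO S Y)) (mF S Y X) = lCmp S (mF S X Y) (FM S (swapC S X Y)))"

definition U_lax_ax where
  "U_lax_ax S \<longleftrightarrow>
     (\<forall>A B. nU S A B \<in> cHom S (cPrd S (UO S A) (UO S B)) (UO S (lTen S A B))) \<and>
     nU1 S \<in> cHom S (cTrm S) (UO S (lUnit S)) \<and>
     (\<forall>A A' B B' u v. u \<in> lHom S A A' \<longrightarrow> v \<in> lHom S B B' \<longrightarrow>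
        cCmp S (prodC S (UO S A) (UO S B) (UM S u) (UM S v)) (nU S A' B') = cCmp S (nU S A B) (UM S (lTenM S u v))) \<and>
     (\<forall>A B C. cCmp S (prodC S (cPrd S (UO S A) (UO S B)) (UO S C) (nU S A B) (cId S (UO S C))) (nU S (lTen S A B) C)
        = cCmp S (assocC S (UO S A) (UO S B) (UO S C))
            (cCmp S (prodC S (UO S A) (cPrd S (UO S B) (UO S C)) (cId S (UO S A)) (nU S B C)) (nU S A (lTen S B C)))) \<and>
     (\<forall>A. cCmp S (prodC S (cTrm S) (UO S A) (nU1 S) (cId S (UO S A))) (nU S (lUnit S) A) = cPr2 S (cTrm S) (UO S A)) \<and>
     (\<forall>A. cCmp S (prodC S (UO S A) (cTrm S) (cId S (UO S A)) (nU1 S)) (nU S A (lUnit S)) = cPr1 S (UO S A) (cTrm S)) \<and>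
     (\<forall>A B. cCmp S (swapC S (UO S A) (UO S B)) (nU S B A) = cCmp S (nU S A B) (UM S (lSym S A B)))"

definition monoidal_adj_ax where
  "monoidal_adj_ax S \<longleftrightarrow>
     (\<forall>X Y. cCmp S (prodC S X Y (adjEta S X) (adjEta S Y)) (cCmp S (nU S (FO S X) (FO S Y)) (UM S (mF S X Y)))
              = adjEta S (cPrd S X Y)) \<and>
     cCmp S (nU1 S) (UM S (mF1 S)) = adjEta S (cTrm S) \<and>
     (\<forall>A B. lCmp S (lCmp S (mF S (UO S A) (UO S B)) (FM S (nU S A B))) (adjEps S (lTen S A B))
              = lTenM S (adjEps S A) (adjEps S B)) \<and>
     lCmp S (lCmp S (mF1 S) (FM S (nU1 S))) (adjEps S (lUnit S)) = lId S (lUnit S)"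

definition LNL_ax where
  "LNL_ax S \<longleftrightarrow> cartesian_ax S \<and> strict_smc_ax S \<and> adjunction_ax S \<and>
                  F_strong_ax S \<and> U_lax_ax S \<and> monoidal_adj_ax S"

definition T_functor_ax where
  "T_functor_ax S \<longleftrightarrow>
     (\<forall>X Y h. h \<in> cHom S X Y \<longrightarrow> Tf S h \<in> LShom S (X, lam S X) (Y, lam S Y)) \<and>
     (\<forall>X. Tf S (cId S X) = LSid S (X, lam S X)) \<and>
     (\<forall>X Y Z f g. f \<in> cHom S X Y \<longrightarrow> g \<in> cHom S Y Z \<longrightarrow>
        Tf S (cCmp S f g) = LScmp S (X, lam S X) (Tf S f) (Tf S g))"

definition t1_ax where
  "t1_ax S \<longleftrightarrow> (\<forall>X Y. LSiso S (cPrd S X Y, lam S (cPrd S X Y)) (cPrd S X Y, lBip S (lam S X) (lam S Y)) (phi S X Y))"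

definition t2_ax where "t2_ax S \<longleftrightarrow> (\<forall>A. lam S (UO S A) = A)"

definition t3_ax where
  "t3_ax S \<longleftrightarrow>
     (\<forall>X A Y B f u. (f, u) \<in> LShom S (X, A) (Y, B) \<longrightarrow>
        LScmp S (cPrd S X (UO S A), A) (Wmap S X A f u) (i2 S Y (UO S B))
        = LScmp S (cPrd S X (UO S A), A) (i2 S X (UO S A)) (Tf S (brace S X A f u)))"

definition GDSC where
  "GDSC S \<longleftrightarrow> LNL_ax S \<and> additive_ax S \<and> products_L_ax S \<and>
               T_functor_ax S \<and> t1_ax S \<and> t2_ax S \<and> t3_ax S"

end

theory Submission
  imports Defs
begin

text \<open>
  All morphisms in the chain rule are constant in the base: each has the form
  (id_X, w_X \<otimes> u) for a morphism u of L, and on such morphisms the composition and the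
  fibrewise tensor of LS(C) are composition and tensor in L. The deriving transform has this
  form too, with u = d_A the L-component of T(\<eta>_UA): by functoriality of T along the second
  projection, the differential of \<pi>2 ; \<eta>_UA does not depend on the base coordinate, so that
  \<Sigma> followed by \<mu> discards it. The chain rule thus becomes the identity
  d_A ; p_A = (c_A \<otimes> id) ; (p_A \<otimes> d_A) ; d_!A in L, which is T applied to the naturality square
  \<eta> ; \<eta> = \<eta> ; UF(\<eta>). Functoriality of T evaluates the left-hand side of the square; the
  right-hand side is evaluated by linearity, T(U v) = (U v, w \<otimes> v), which axiom (t.3) yields by
  computing the differential of \<pi>2 ; U v on 1 \<times> U B in two ways.
\<close>

locale gdsc =
  fixes S :: "('c,'f,'l,'g) gdsc_data"
  assumes gdsc: "GDSC S"
begin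

abbreviation Chom where "Chom \<equiv> cHom S"
abbreviation cid where "cid \<equiv> cId S"
abbreviation C_comp (infixl "\<Zcomp>\<^sub>C" 55) where "f \<Zcomp>\<^sub>C g \<equiv> cCmp S f g"
abbreviation C_prod (infixr "\<times>\<^sub>C" 65) where "X \<times>\<^sub>C Y \<equiv> cPrd S X Y"
abbreviation "\<pi>\<^sub>1 \<equiv> cPr1 S"
abbreviation "\<pi>\<^sub>2 \<equiv> cPr2 S"
abbreviation Lhom where "Lhom \<equiv> lHom S"
abbreviation lid where "lid \<equiv> lId S"
abbreviation L_comp (infixl "\<Zcomp>" 55) where "f \<Zcomp> g \<equiv> lCmp S f g"
abbreviation L_tensor (infixr "\<otimes>" 60) where "f \<otimes> g \<equiv> lTenM S f g"
abbreviation L_tensor_obj (infixr "\<otimes>\<^sub>o" 60) where "A \<otimes>\<^sub>o B \<equiv> lTen S A B"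
abbreviation "Fo \<equiv> FO S"
abbreviation "Fm \<equiv> FM S"
abbreviation "Uo \<equiv> UO S"
abbreviation "Um \<equiv> UM S"
abbreviation "\<eta> \<equiv> adjEta S"
abbreviation "wk \<equiv> weak S"
abbreviation "ctr \<equiv> contr S"

lemma gdsc_axioms: "cartesian_ax S" "strict_smc_ax S" "additive_ax S" "products_L_ax S"
  "adjunction_ax S" "F_strong_ax S" "U_lax_ax S" "monoidal_adj_ax S"
  "T_functor_ax S" "t1_ax S" "t2_ax S" "t3_ax S"
  using gdsc unfolding GDSC_def LNL_ax_def by auto

lemma lam_UO[simp]: "lam S (Uo A) = A" using gdsc_axioms(11) unfolding t2_ax_def by auto

lemma C_category: "is_category (cHom S) (cId S) (cCmp S)" using gdsc_axioms(1) unfolding cartesian_ax_def by auto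

lemma C_id_hom: "X = A \<Longrightarrow> X = B \<Longrightarrow> cid X \<in> Chom A B"
  using C_category unfolding is_category_def by auto

lemma C_comp_hom: "f \<in> Chom X Y \<Longrightarrow> g \<in> Chom Y' Z \<Longrightarrow> Y = Y' \<Longrightarrow> X = X' \<Longrightarrow> Z = Z' \<Longrightarrow> f \<Zcomp>\<^sub>C g \<in> Chom X' Z'"
  using C_category unfolding is_category_def by blast

lemma C_comp_id_left: "f \<in> Chom X Y \<Longrightarrow> cid X \<Zcomp>\<^sub>C f = f"
  using C_category unfolding is_category_def by blast

lemma C_comp_id_right: "f \<in> Chom X Y \<Longrightarrow> f \<Zcomp>\<^sub>C cid Y = f"
  using C_category unfolding is_category_def by blast

lemma C_comp_assoc: "f \<in> Chom W X \<Longrightarrow> g \<in> Chom X Y \<Longrightarrow> h \<in> Chom Y Z \<Longrightarrow> f \<Zcomp>\<^sub>C g \<Zcomp>\<^sub>C h = f \<Zcomp>\<^sub>C (g \<Zcomp>\<^sub>C h)"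
  using C_category unfolding is_category_def by blast

lemma C_fst_hom: "X \<times>\<^sub>C Y = A \<Longrightarrow> X = B \<Longrightarrow> \<pi>\<^sub>1 X Y \<in> Chom A B"
  using gdsc_axioms(1) unfolding cartesian_ax_def by blast

lemma C_snd_hom: "X \<times>\<^sub>C Y = A \<Longrightarrow> Y = B \<Longrightarrow> \<pi>\<^sub>2 X Y \<in> Chom A B"
  using gdsc_axioms(1) unfolding cartesian_ax_def by blast

lemma C_pair_hom: "f \<in> Chom Z X \<Longrightarrow> g \<in> Chom Z' Y \<Longrightarrow> Z = Z' \<Longrightarrow> Z = A \<Longrightarrow> X \<times>\<^sub>C Y = B \<Longrightarrow> cTup S f g \<in> Chom A B"
  using gdsc_axioms(1) unfolding cartesian_ax_def by blast

lemma C_pair_fst: "f \<in> Chom Z X \<Longrightarrow> g \<in> Chom Z Y \<Longrightarrow> cTup S f g \<Zcomp>\<^sub>C \<pi>\<^sub>1 X Y = f"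
  using gdsc_axioms(1) unfolding cartesian_ax_def by blast

lemma C_pair_snd: "f \<in> Chom Z X \<Longrightarrow> g \<in> Chom Z Y \<Longrightarrow> cTup S f g \<Zcomp>\<^sub>C \<pi>\<^sub>2 X Y = g"
  using gdsc_axioms(1) unfolding cartesian_ax_def by blast

lemma C_pair_eta: "h \<in> Chom Z (X \<times>\<^sub>C Y) \<Longrightarrow> cTup S (h \<Zcomp>\<^sub>C \<pi>\<^sub>1 X Y) (h \<Zcomp>\<^sub>C \<pi>\<^sub>2 X Y) = h"
  using gdsc_axioms(1) unfolding cartesian_ax_def by blast

lemma C_term_hom: "X = A \<Longrightarrow> cTrm S = B \<Longrightarrow> cBang S X \<in> Chom A B"
  using gdsc_axioms(1) unfolding cartesian_ax_def by blast

lemma C_term_unique: "f \<in> Chom X (cTrm S) \<Longrightarrow> f = cBang S X"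
  using gdsc_axioms(1) unfolding cartesian_ax_def by blast

lemma L_category: "is_category (lHom S) (lId S) (lCmp S)" using gdsc_axioms(2) unfolding strict_smc_ax_def by auto

lemma L_id_hom: "X = A \<Longrightarrow> X = B \<Longrightarrow> lid X \<in> Lhom A B"
  using L_category unfolding is_category_def by auto

lemma L_comp_hom: "f \<in> Lhom X Y \<Longrightarrow> g \<in> Lhom Y' Z \<Longrightarrow> Y = Y' \<Longrightarrow> X = X' \<Longrightarrow> Z = Z' \<Longrightarrow> f \<Zcomp> g \<in> Lhom X' Z'"
  using L_category unfolding is_category_def by blast

lemma L_comp_id_left: "f \<in> Lhom X Y \<Longrightarrow> lid X \<Zcomp> f = f"
  using L_category unfolding is_category_def by blast

lemma L_comp_id_right: "f \<in> Lhom X Y \<Longrightarrow> f \<Zcomp> lid Y = f"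
  using L_category unfolding is_category_def by blast

lemma L_comp_assoc: "f \<in> Lhom W X \<Longrightarrow> g \<in> Lhom X Y \<Longrightarrow> h \<in> Lhom Y Z \<Longrightarrow> f \<Zcomp> g \<Zcomp> h = f \<Zcomp> (g \<Zcomp> h)"
  using L_category unfolding is_category_def by blast

lemma L_tensor_hom: "f \<in> Lhom A B \<Longrightarrow> g \<in> Lhom C D \<Longrightarrow> A \<otimes>\<^sub>o C = X \<Longrightarrow> B \<otimes>\<^sub>o D = Y \<Longrightarrow> f \<otimes> g \<in> Lhom X Y"
  using gdsc_axioms(2) unfolding strict_smc_ax_def by auto

lemma L_tensor_id: "lid A \<otimes> lid B = lid (A \<otimes>\<^sub>o B)"
  using gdsc_axioms(2) unfolding strict_smc_ax_def by auto

lemma L_interchange: "f \<in> Lhom A B \<Longrightarrow> f' \<in> Lhom B C \<Longrightarrow> g \<in> Lhom D E \<Longrightarrow> g' \<in> Lhom E G \<Longrightarrow>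
   (f \<Zcomp> f') \<otimes> (g \<Zcomp> g') = (f \<otimes> g) \<Zcomp> (f' \<otimes> g')"
  using gdsc_axioms(2) unfolding strict_smc_ax_def by auto

lemma L_tensor_assoc: "f \<in> Lhom A A' \<Longrightarrow> g \<in> Lhom B B' \<Longrightarrow> h \<in> Lhom C C' \<Longrightarrow> (f \<otimes> g) \<otimes> h = f \<otimes> g \<otimes> h"
  using gdsc_axioms(2) unfolding strict_smc_ax_def by auto

lemma L_tensor_unit_left: "f \<in> Lhom A B \<Longrightarrow> lid (lUnit S) \<otimes> f = f"
  using gdsc_axioms(2) unfolding strict_smc_ax_def by auto

lemma L_tensor_unit_right: "f \<in> Lhom A B \<Longrightarrow> f \<otimes> lid (lUnit S) = f"
  using gdsc_axioms(2) unfolding strict_smc_ax_def by auto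

lemma L_sym_hom: "A \<otimes>\<^sub>o B = X \<Longrightarrow> B \<otimes>\<^sub>o A = Y \<Longrightarrow> lSym S A B \<in> Lhom X Y"
  using gdsc_axioms(2) unfolding strict_smc_ax_def by auto

lemma L_sym_natural: "f \<in> Lhom A A' \<Longrightarrow> g \<in> Lhom B B' \<Longrightarrow> (f \<otimes> g) \<Zcomp> lSym S A' B' = lSym S A B \<Zcomp> (g \<otimes> f)"
  using gdsc_axioms(2) unfolding strict_smc_ax_def by auto

lemma L_sym_inverse: "lSym S A B \<Zcomp> lSym S B A = lid (A \<otimes>\<^sub>o B)"
  using gdsc_axioms(2) unfolding strict_smc_ax_def by auto

lemma L_sym_unit_right: "lSym S A (lUnit S) = lid A"
  using gdsc_axioms(2) unfolding strict_smc_ax_def by auto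

lemma L_tensor_obj_assoc[simp]: "(A \<otimes>\<^sub>o B) \<otimes>\<^sub>o C = A \<otimes>\<^sub>o B \<otimes>\<^sub>o C"
  and L_tensor_obj_unit_left[simp]: "lUnit S \<otimes>\<^sub>o A = A" and L_tensor_obj_unit_right[simp]: "A \<otimes>\<^sub>o lUnit S = A"
  using gdsc_axioms(2) unfolding strict_smc_ax_def by auto

lemma L_sym_unit_left: "lSym S (lUnit S) A = lid A"
proof -
  have "lSym S A (lUnit S) \<Zcomp> lSym S (lUnit S) A = lid A" using L_sym_inverse[of A "lUnit S"] by simp
  hence "lid A \<Zcomp> lSym S (lUnit S) A = lid A" by (simp add: L_sym_unit_right)
  moreover have "lSym S (lUnit S) A \<in> Lhom A A" by (rule L_sym_hom) simp_all
  ultimately show ?thesis using L_comp_id_left by metis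
qed

lemma F_functor: "is_functor (cHom S) (cId S) (cCmp S) (lHom S) (lId S) (lCmp S) (FO S) (FM S)"
  and U_functor: "is_functor (lHom S) (lId S) (lCmp S) (cHom S) (cId S) (cCmp S) (UO S) (UM S)"
  using gdsc_axioms(5) unfolding adjunction_ax_def by auto

lemma F_hom: "f \<in> Chom X Y \<Longrightarrow> Fo X = A \<Longrightarrow> Fo Y = B \<Longrightarrow> Fm f \<in> Lhom A B"
  using F_functor unfolding is_functor_def by blast

lemma F_id: "Fm (cid X) = lid (Fo X)"
  using F_functor unfolding is_functor_def by blast

lemma F_comp: "f \<in> Chom X Y \<Longrightarrow> g \<in> Chom Y Z \<Longrightarrow> Fm (f \<Zcomp>\<^sub>C g) = Fm f \<Zcomp> Fm g"
  using F_functor unfolding is_functor_def by blast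

lemma U_hom: "f \<in> Lhom X Y \<Longrightarrow> Uo X = A \<Longrightarrow> Uo Y = B \<Longrightarrow> Um f \<in> Chom A B"
  using U_functor unfolding is_functor_def by blast

lemma U_id: "Um (lid X) = cid (Uo X)"
  using U_functor unfolding is_functor_def by blast

lemma U_comp: "f \<in> Lhom X Y \<Longrightarrow> g \<in> Lhom Y Z \<Longrightarrow> Um (f \<Zcomp> g) = Um f \<Zcomp>\<^sub>C Um g"
  using U_functor unfolding is_functor_def by blast

lemma eta_hom: "X = A \<Longrightarrow> Uo (Fo X) = B \<Longrightarrow> \<eta> X \<in> Chom A B"
  using gdsc_axioms(5) unfolding adjunction_ax_def by blast

lemma eta_natural: "f \<in> Chom X Y \<Longrightarrow> f \<Zcomp>\<^sub>C \<eta> Y = \<eta> X \<Zcomp>\<^sub>C Um (Fm f)"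
  using gdsc_axioms(5) unfolding adjunction_ax_def by blast

lemma mF_hom: "Fo X \<otimes>\<^sub>o Fo Y = A \<Longrightarrow> Fo (X \<times>\<^sub>C Y) = B \<Longrightarrow> mF S X Y \<in> Lhom A B"
  using gdsc_axioms(6) unfolding F_strong_ax_def by blast

lemma mFi_hom: "Fo (X \<times>\<^sub>C Y) = A \<Longrightarrow> Fo X \<otimes>\<^sub>o Fo Y = B \<Longrightarrow> mFi S X Y \<in> Lhom A B"
  using gdsc_axioms(6) unfolding F_strong_ax_def by blast

lemma mF1_hom: "lUnit S = A \<Longrightarrow> Fo (cTrm S) = B \<Longrightarrow> mF1 S \<in> Lhom A B"
  using gdsc_axioms(6) unfolding F_strong_ax_def by blast

lemma mF1i_hom: "Fo (cTrm S) = A \<Longrightarrow> lUnit S = B \<Longrightarrow> mF1i S \<in> Lhom A B"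
  using gdsc_axioms(6) unfolding F_strong_ax_def by blast

lemma mF_mFi: "mF S X Y \<Zcomp> mFi S X Y = lid (Fo X \<otimes>\<^sub>o Fo Y)"
  and mFi_mF: "mFi S X Y \<Zcomp> mF S X Y = lid (Fo (X \<times>\<^sub>C Y))"
  and mF1_mF1i: "mF1 S \<Zcomp> mF1i S = lid (lUnit S)"
  and mF1i_mF1: "mF1i S \<Zcomp> mF1 S = lid (Fo (cTrm S))"
  using gdsc_axioms(6) unfolding F_strong_ax_def by blast+

lemma mF_natural: "f \<in> Chom X X' \<Longrightarrow> g \<in> Chom Y Y' \<Longrightarrow>
   (Fm f \<otimes> Fm g) \<Zcomp> mF S X' Y' = mF S X Y \<Zcomp> Fm (prodC S X Y f g)"
  using gdsc_axioms(6) unfolding F_strong_ax_def by blast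

lemma mF_assoc: "(mF S X Y \<otimes> lid (Fo Z)) \<Zcomp> mF S (X \<times>\<^sub>C Y) Z \<Zcomp> Fm (assocC S X Y Z)
               = (lid (Fo X) \<otimes> mF S Y Z) \<Zcomp> mF S X (Y \<times>\<^sub>C Z)"
  using gdsc_axioms(6) unfolding F_strong_ax_def by blast

lemma mF_unit_left: "(mF1 S \<otimes> lid (Fo X)) \<Zcomp> mF S (cTrm S) X \<Zcomp> Fm (\<pi>\<^sub>2 (cTrm S) X) = lid (Fo X)"
  using gdsc_axioms(6) unfolding F_strong_ax_def by blast

lemma mF_unit_right: "(lid (Fo X) \<otimes> mF1 S) \<Zcomp> mF S X (cTrm S) \<Zcomp> Fm (\<pi>\<^sub>1 X (cTrm S)) = lid (Fo X)"
  using gdsc_axioms(6) unfolding F_strong_ax_def by blast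

lemma nU_hom: "Uo A \<times>\<^sub>C Uo B = X \<Longrightarrow> Uo (A \<otimes>\<^sub>o B) = Y \<Longrightarrow> nU S A B \<in> Chom X Y"
  using gdsc_axioms(7) unfolding U_lax_ax_def by blast

lemma nU1_hom: "cTrm S = X \<Longrightarrow> Uo (lUnit S) = Y \<Longrightarrow> nU1 S \<in> Chom X Y"
  using gdsc_axioms(7) unfolding U_lax_ax_def by blast

lemma nU_natural: "u \<in> Lhom A A' \<Longrightarrow> v \<in> Lhom B B' \<Longrightarrow>
   prodC S (Uo A) (Uo B) (Um u) (Um v) \<Zcomp>\<^sub>C nU S A' B' = nU S A B \<Zcomp>\<^sub>C Um (u \<otimes> v)"
  using gdsc_axioms(7) unfolding U_lax_ax_def by blast

lemma nU_unit_left: "prodC S (cTrm S) (Uo A) (nU1 S) (cid (Uo A)) \<Zcomp>\<^sub>C nU S (lUnit S) A = \<pi>\<^sub>2 (cTrm S) (Uo A)"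
  using gdsc_axioms(7) unfolding U_lax_ax_def by blast

lemma nU1_mF1: "nU1 S \<Zcomp>\<^sub>C Um (mF1 S) = \<eta> (cTrm S)"
  using gdsc_axioms(8) unfolding monoidal_adj_ax_def by blast

lemma TM_hom: "h \<in> Chom X Y \<Longrightarrow> Fo X \<otimes>\<^sub>o lam S X = A \<Longrightarrow> lam S Y = B \<Longrightarrow> TM S h \<in> Lhom A B"
  using gdsc_axioms(9) unfolding T_functor_ax_def Tf_def LShom_def by auto

lemma TM_comp: "f \<in> Chom X Y \<Longrightarrow> g \<in> Chom Y Z \<Longrightarrow>
   TM S (f \<Zcomp>\<^sub>C g) = (ctr X \<otimes> lid (lam S X)) \<Zcomp> (Fm f \<otimes> TM S f) \<Zcomp> TM S g"
  using gdsc_axioms(9) unfolding T_functor_ax_def Tf_def LScmp_def by auto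

lemma Tf_hom: "h \<in> Chom X Y \<Longrightarrow> Tf S h \<in> LShom S (X, lam S X) (Y, lam S Y)"
  using gdsc_axioms(9) unfolding T_functor_ax_def by blast

lemma Tf_comp: "f \<in> Chom X Y \<Longrightarrow> g \<in> Chom Y Z \<Longrightarrow> Tf S (f \<Zcomp>\<^sub>C g) = LScmp S (X, lam S X) (Tf S f) (Tf S g)"
  using gdsc_axioms(9) unfolding T_functor_ax_def by blast

lemma wk_hom: "Fo X = A \<Longrightarrow> lUnit S = B \<Longrightarrow> wk X \<in> Lhom A B"
  unfolding weak_def by (auto intro!: L_comp_hom F_hom C_term_hom mF1i_hom)

lemma diagC_hom: "X = A \<Longrightarrow> X \<times>\<^sub>C X = B \<Longrightarrow> diagC S X \<in> Chom A B"
  unfolding diagC_def by (auto intro!: C_pair_hom C_id_hom)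

lemma ctr_hom: "Fo X = A \<Longrightarrow> Fo X \<otimes>\<^sub>o Fo X = B \<Longrightarrow> ctr X \<in> Lhom A B"
  unfolding contr_def by (auto intro!: L_comp_hom F_hom diagC_hom mFi_hom)

lemma prodC_hom: "f \<in> Chom X X' \<Longrightarrow> g \<in> Chom Y Y' \<Longrightarrow> X \<times>\<^sub>C Y = A \<Longrightarrow> X' \<times>\<^sub>C Y' = B \<Longrightarrow> prodC S X Y f g \<in> Chom A B"
  unfolding prodC_def by (auto intro!: C_pair_hom C_comp_hom C_fst_hom C_snd_hom)

lemma assocC_hom: "(X \<times>\<^sub>C Y) \<times>\<^sub>C Z = A \<Longrightarrow> X \<times>\<^sub>C Y \<times>\<^sub>C Z = B \<Longrightarrow> assocC S X Y Z \<in> Chom A B"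
  unfolding assocC_def by (auto intro!: C_pair_hom C_comp_hom C_fst_hom C_snd_hom)


lemma lBp2_hom: "lBip S A B = X \<Longrightarrow> B = Y \<Longrightarrow> lBp2 S A B \<in> Lhom X Y"
  using gdsc_axioms(4) unfolding products_L_ax_def by blast

lemma lTup_hom: "f \<in> Lhom C A \<Longrightarrow> g \<in> Lhom C' B \<Longrightarrow> C = C' \<Longrightarrow> C = X \<Longrightarrow> lBip S A B = Y \<Longrightarrow> lTup S f g \<in> Lhom X Y"
  using gdsc_axioms(4) unfolding products_L_ax_def by blast

lemma lTup_lBp2: "f \<in> Lhom C A \<Longrightarrow> g \<in> Lhom C B \<Longrightarrow> lTup S f g \<Zcomp> lBp2 S A B = g"
  using gdsc_axioms(4) unfolding products_L_ax_def by blast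

lemma lZero_hom: "A = X \<Longrightarrow> B = Y \<Longrightarrow> lZero S A B \<in> Lhom X Y"
  using gdsc_axioms(3) unfolding additive_ax_def by auto

lemma inj2_hom: "B = X \<Longrightarrow> lBip S A B = Y \<Longrightarrow> inj2 S A B \<in> Lhom X Y"
  unfolding inj2_def by (auto intro!: lTup_hom lZero_hom L_id_hom)

lemma inj2_lBp2: "inj2 S A B \<Zcomp> lBp2 S A B = lid B"
  unfolding inj2_def by (rule lTup_lBp2) (auto intro!: lZero_hom L_id_hom)

text \<open>
  The hom-set rules take their objects as equations, so that \<open>(rule hom_intros | simp)+\<close>
  discharges typing side conditions modulo the strict monoidal identities on objects.
\<close>

lemmas hom_intros = C_id_hom C_comp_hom C_fst_hom C_snd_hom C_pair_hom C_term_hom L_id_hom L_comp_hom L_tensor_hom L_sym_hom F_hom U_hom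
  eta_hom mF_hom mFi_hom mF1_hom mF1i_hom nU_hom nU1_hom TM_hom wk_hom diagC_hom ctr_hom prodC_hom assocC_hom
  lBp2_hom lTup_hom lZero_hom inj2_hom

lemma C_comp_pair:
  assumes "h \<in> Chom W Z" "f \<in> Chom Z X" "g \<in> Chom Z Y"
  shows "h \<Zcomp>\<^sub>C cTup S f g = cTup S (h \<Zcomp>\<^sub>C f) (h \<Zcomp>\<^sub>C g)"
proof -
  note hom = hom_intros assms
  have "h \<Zcomp>\<^sub>C cTup S f g = cTup S (h \<Zcomp>\<^sub>C cTup S f g \<Zcomp>\<^sub>C \<pi>\<^sub>1 X Y) (h \<Zcomp>\<^sub>C cTup S f g \<Zcomp>\<^sub>C \<pi>\<^sub>2 X Y)"
    by (rule C_pair_eta[symmetric]) (rule hom | simp)+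
  also have "h \<Zcomp>\<^sub>C cTup S f g \<Zcomp>\<^sub>C \<pi>\<^sub>1 X Y = h \<Zcomp>\<^sub>C (cTup S f g \<Zcomp>\<^sub>C \<pi>\<^sub>1 X Y)"
    by (rule C_comp_assoc) (rule hom | simp)+
  also have "h \<Zcomp>\<^sub>C cTup S f g \<Zcomp>\<^sub>C \<pi>\<^sub>2 X Y = h \<Zcomp>\<^sub>C (cTup S f g \<Zcomp>\<^sub>C \<pi>\<^sub>2 X Y)"
    by (rule C_comp_assoc) (rule hom | simp)+
  finally show ?thesis using C_pair_fst[OF assms(2,3)] C_pair_snd[OF assms(2,3)] by simp
qed

lemma C_pair_fst_snd: "cTup S (\<pi>\<^sub>1 X Y) (\<pi>\<^sub>2 X Y) = cid (X \<times>\<^sub>C Y)"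
proof -
  have "cTup S (cid (X \<times>\<^sub>C Y) \<Zcomp>\<^sub>C \<pi>\<^sub>1 X Y) (cid (X \<times>\<^sub>C Y) \<Zcomp>\<^sub>C \<pi>\<^sub>2 X Y) = cid (X \<times>\<^sub>C Y)"
    by (rule C_pair_eta) (rule hom_intros | simp)+
  moreover have "cid (X \<times>\<^sub>C Y) \<Zcomp>\<^sub>C \<pi>\<^sub>1 X Y = \<pi>\<^sub>1 X Y" by (rule C_comp_id_left) (rule hom_intros | simp)+
  moreover have "cid (X \<times>\<^sub>C Y) \<Zcomp>\<^sub>C \<pi>\<^sub>2 X Y = \<pi>\<^sub>2 X Y" by (rule C_comp_id_left) (rule hom_intros | simp)+
  ultimately show ?thesis by simp
qed

lemma prodC_fst: assumes "f \<in> Chom X X'" "g \<in> Chom Y Y'"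
  shows "prodC S X Y f g \<Zcomp>\<^sub>C \<pi>\<^sub>1 X' Y' = \<pi>\<^sub>1 X Y \<Zcomp>\<^sub>C f"
  unfolding prodC_def using assms by (rule_tac C_pair_fst) (rule hom_intros assms | simp)+

lemma prodC_snd: assumes "f \<in> Chom X X'" "g \<in> Chom Y Y'"
  shows "prodC S X Y f g \<Zcomp>\<^sub>C \<pi>\<^sub>2 X' Y' = \<pi>\<^sub>2 X Y \<Zcomp>\<^sub>C g"
  unfolding prodC_def using assms by (rule_tac C_pair_snd) (rule hom_intros assms | simp)+

lemma C_pair_comp_prodC:
  assumes "a \<in> Chom Z X" "b \<in> Chom Z Y" "f \<in> Chom X X'" "g \<in> Chom Y Y'"
  shows "cTup S a b \<Zcomp>\<^sub>C prodC S X Y f g = cTup S (a \<Zcomp>\<^sub>C f) (b \<Zcomp>\<^sub>C g)"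
proof -
  note hom = hom_intros assms
  have "cTup S a b \<Zcomp>\<^sub>C prodC S X Y f g = cTup S (cTup S a b \<Zcomp>\<^sub>C (\<pi>\<^sub>1 X Y \<Zcomp>\<^sub>C f)) (cTup S a b \<Zcomp>\<^sub>C (\<pi>\<^sub>2 X Y \<Zcomp>\<^sub>C g))"
    unfolding prodC_def by (rule C_comp_pair) (rule hom | simp)+
  also have "cTup S a b \<Zcomp>\<^sub>C (\<pi>\<^sub>1 X Y \<Zcomp>\<^sub>C f) = cTup S a b \<Zcomp>\<^sub>C \<pi>\<^sub>1 X Y \<Zcomp>\<^sub>C f"
    by (rule C_comp_assoc[symmetric]) (rule hom | simp)+
  also have "cTup S a b \<Zcomp>\<^sub>C (\<pi>\<^sub>2 X Y \<Zcomp>\<^sub>C g) = cTup S a b \<Zcomp>\<^sub>C \<pi>\<^sub>2 X Y \<Zcomp>\<^sub>C g"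
    by (rule C_comp_assoc[symmetric]) (rule hom | simp)+
  finally show ?thesis using C_pair_fst[OF assms(1,2)] C_pair_snd[OF assms(1,2)] by simp
qed

lemma prodC_comp:
  assumes "f \<in> Chom X X'" "g \<in> Chom Y Y'" "f' \<in> Chom X' X''" "g' \<in> Chom Y' Y''"
  shows "prodC S X Y f g \<Zcomp>\<^sub>C prodC S X' Y' f' g' = prodC S X Y (f \<Zcomp>\<^sub>C f') (g \<Zcomp>\<^sub>C g')"
proof -
  note hom = hom_intros assms
  have "prodC S X Y f g \<Zcomp>\<^sub>C prodC S X' Y' f' g' = cTup S (\<pi>\<^sub>1 X Y \<Zcomp>\<^sub>C f \<Zcomp>\<^sub>C f') (\<pi>\<^sub>2 X Y \<Zcomp>\<^sub>C g \<Zcomp>\<^sub>C g')"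
    unfolding prodC_def[of S X Y f g] by (rule C_pair_comp_prodC) (rule hom | simp)+
  also have "\<pi>\<^sub>1 X Y \<Zcomp>\<^sub>C f \<Zcomp>\<^sub>C f' = \<pi>\<^sub>1 X Y \<Zcomp>\<^sub>C (f \<Zcomp>\<^sub>C f')" by (rule C_comp_assoc) (rule hom | simp)+
  also have "\<pi>\<^sub>2 X Y \<Zcomp>\<^sub>C g \<Zcomp>\<^sub>C g' = \<pi>\<^sub>2 X Y \<Zcomp>\<^sub>C (g \<Zcomp>\<^sub>C g')" by (rule C_comp_assoc) (rule hom | simp)+
  finally show ?thesis unfolding prodC_def .
qed

lemma C_comp_diag: assumes "f \<in> Chom X Y" shows "f \<Zcomp>\<^sub>C diagC S Y = cTup S f f"
proof -
  note hom = hom_intros assms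
  have "f \<Zcomp>\<^sub>C diagC S Y = cTup S (f \<Zcomp>\<^sub>C cid Y) (f \<Zcomp>\<^sub>C cid Y)"
    unfolding diagC_def by (rule C_comp_pair) (rule hom | simp)+
  thus ?thesis using C_comp_id_right[OF assms] by simp
qed

lemma diagC_comp_prodC: assumes "f \<in> Chom X Y" "g \<in> Chom X Z"
  shows "diagC S X \<Zcomp>\<^sub>C prodC S X X f g = cTup S f g"
proof -
  note hom = hom_intros assms
  have "diagC S X \<Zcomp>\<^sub>C prodC S X X f g = cTup S (cid X \<Zcomp>\<^sub>C f) (cid X \<Zcomp>\<^sub>C g)"
    unfolding diagC_def by (rule C_pair_comp_prodC) (rule hom | simp)+
  thus ?thesis using C_comp_id_left assms by simp
qed

lemma assocC_diag: "cTup S (diagC S X) (cid X) \<Zcomp>\<^sub>C assocC S X X X = cTup S (cid X) (diagC S X)"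
proof -
  note hom = hom_intros
  define t where "t = cTup S (diagC S X) (cid X)"
  have tty: "t \<in> Chom X ((X \<times>\<^sub>C X) \<times>\<^sub>C X)" unfolding t_def by (rule hom | simp)+
  note hom = hom tty
  have "t \<Zcomp>\<^sub>C assocC S X X X = cTup S (t \<Zcomp>\<^sub>C (\<pi>\<^sub>1 (X \<times>\<^sub>C X) X \<Zcomp>\<^sub>C \<pi>\<^sub>1 X X))
          (t \<Zcomp>\<^sub>C cTup S (\<pi>\<^sub>1 (X \<times>\<^sub>C X) X \<Zcomp>\<^sub>C \<pi>\<^sub>2 X X) (\<pi>\<^sub>2 (X \<times>\<^sub>C X) X))"
    unfolding assocC_def by (rule C_comp_pair) (rule hom | simp)+
  also have "t \<Zcomp>\<^sub>C cTup S (\<pi>\<^sub>1 (X \<times>\<^sub>C X) X \<Zcomp>\<^sub>C \<pi>\<^sub>2 X X) (\<pi>\<^sub>2 (X \<times>\<^sub>C X) X)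
     = cTup S (t \<Zcomp>\<^sub>C (\<pi>\<^sub>1 (X \<times>\<^sub>C X) X \<Zcomp>\<^sub>C \<pi>\<^sub>2 X X)) (t \<Zcomp>\<^sub>C \<pi>\<^sub>2 (X \<times>\<^sub>C X) X)"
    by (rule C_comp_pair) (rule hom | simp)+
  also have "t \<Zcomp>\<^sub>C (\<pi>\<^sub>1 (X \<times>\<^sub>C X) X \<Zcomp>\<^sub>C \<pi>\<^sub>1 X X) = t \<Zcomp>\<^sub>C \<pi>\<^sub>1 (X \<times>\<^sub>C X) X \<Zcomp>\<^sub>C \<pi>\<^sub>1 X X"
    by (rule C_comp_assoc[symmetric]) (rule hom | simp)+
  also have "t \<Zcomp>\<^sub>C (\<pi>\<^sub>1 (X \<times>\<^sub>C X) X \<Zcomp>\<^sub>C \<pi>\<^sub>2 X X) = t \<Zcomp>\<^sub>C \<pi>\<^sub>1 (X \<times>\<^sub>C X) X \<Zcomp>\<^sub>C \<pi>\<^sub>2 X X"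
    by (rule C_comp_assoc[symmetric]) (rule hom | simp)+
  also have "t \<Zcomp>\<^sub>C \<pi>\<^sub>1 (X \<times>\<^sub>C X) X = diagC S X" unfolding t_def by (rule C_pair_fst) (rule hom | simp)+
  also have "t \<Zcomp>\<^sub>C \<pi>\<^sub>2 (X \<times>\<^sub>C X) X = cid X" unfolding t_def by (rule C_pair_snd) (rule hom | simp)+
  also have "diagC S X \<Zcomp>\<^sub>C \<pi>\<^sub>1 X X = cid X" unfolding diagC_def by (rule C_pair_fst) (rule hom | simp)+
  also have "diagC S X \<Zcomp>\<^sub>C \<pi>\<^sub>2 X X = cid X" unfolding diagC_def by (rule C_pair_snd) (rule hom | simp)+
  finally show ?thesis unfolding t_def diagC_def .
qed

lemma L_tensor_split_left_first: assumes "f \<in> Lhom A B" "g \<in> Lhom C D"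
  shows "f \<otimes> g = (f \<otimes> lid C) \<Zcomp> (lid B \<otimes> g)"
proof -
  note hom = hom_intros assms
  have "f \<otimes> g = (f \<Zcomp> lid B) \<otimes> (lid C \<Zcomp> g)" using L_comp_id_right[OF assms(1)] L_comp_id_left[OF assms(2)] by simp
  also have "... = (f \<otimes> lid C) \<Zcomp> (lid B \<otimes> g)" by (rule L_interchange) (rule hom | simp)+
  finally show ?thesis .
qed

lemma L_tensor_split_right_first: assumes "f \<in> Lhom A B" "g \<in> Lhom C D"
  shows "f \<otimes> g = (lid A \<otimes> g) \<Zcomp> (f \<otimes> lid D)"
proof -
  note hom = hom_intros assms
  have "f \<otimes> g = (lid A \<Zcomp> f) \<otimes> (g \<Zcomp> lid D)" using L_comp_id_left[OF assms(1)] L_comp_id_right[OF assms(2)] by simp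
  also have "... = (lid A \<otimes> g) \<Zcomp> (f \<otimes> lid D)" by (rule L_interchange) (rule hom | simp)+
  finally show ?thesis .
qed

lemma L_tensor_absorb_left: assumes "k \<in> Lhom K (lUnit S)" "f \<in> Lhom A B"
  shows "k \<otimes> f = (k \<otimes> lid A) \<Zcomp> f"
  using L_tensor_split_left_first[OF assms] L_tensor_unit_left[OF assms(2)] by simp

lemma L_tensor_absorb_right: assumes "k \<in> Lhom K (lUnit S)" "f \<in> Lhom A B"
  shows "f \<otimes> k = (lid A \<otimes> k) \<Zcomp> f"
  using L_tensor_split_right_first[OF assms(2,1)] L_tensor_unit_right[OF assms(2)] by simp

lemma L_iso_cancel_left:
  assumes "a \<in> Lhom A B" "ai \<in> Lhom B A" "ai \<Zcomp> a = lid B" "f \<in> Lhom B C" "g \<in> Lhom B C" "a \<Zcomp> f = a \<Zcomp> g"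
  shows "f = g"
proof -
  note hom = hom_intros assms
  have "f = ai \<Zcomp> a \<Zcomp> f" using assms(3) L_comp_id_left[OF assms(4)] by simp
  also have "... = ai \<Zcomp> (a \<Zcomp> f)" by (rule L_comp_assoc) (rule hom | simp)+
  also have "... = ai \<Zcomp> (a \<Zcomp> g)" using assms(6) by simp
  also have "... = ai \<Zcomp> a \<Zcomp> g" by (rule L_comp_assoc[symmetric]) (rule hom | simp)+
  also have "... = g" using assms(3) L_comp_id_left[OF assms(5)] by simp
  finally show ?thesis .
qed

lemma L_iso_comp:
  assumes "a \<in> Lhom A B" "b \<in> Lhom B C" "ai \<in> Lhom B A" "bi \<in> Lhom C B" "a \<Zcomp> ai = lid A" "b \<Zcomp> bi = lid B"
  shows "a \<Zcomp> b \<Zcomp> (bi \<Zcomp> ai) = lid A"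
proof -
  note hom = hom_intros assms
  have "a \<Zcomp> b \<Zcomp> (bi \<Zcomp> ai) = a \<Zcomp> (b \<Zcomp> (bi \<Zcomp> ai))" by (rule L_comp_assoc) (rule hom | simp)+
  also have "b \<Zcomp> (bi \<Zcomp> ai) = b \<Zcomp> bi \<Zcomp> ai" by (rule L_comp_assoc[symmetric]) (rule hom | simp)+
  also have "... = ai" using assms(6) L_comp_id_left[OF assms(3)] by simp
  finally show ?thesis using assms(5) by simp
qed

lemma L_tensor_iso: assumes "a \<in> Lhom A B" "ai \<in> Lhom B A" "a \<Zcomp> ai = lid A"
  shows "(a \<otimes> lid C) \<Zcomp> (ai \<otimes> lid C) = lid (A \<otimes>\<^sub>o C)"
    and "(lid C \<otimes> a) \<Zcomp> (lid C \<otimes> ai) = lid (C \<otimes>\<^sub>o A)"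
proof -
  note hom = hom_intros assms
  have "(a \<otimes> lid C) \<Zcomp> (ai \<otimes> lid C) = (a \<Zcomp> ai) \<otimes> (lid C \<Zcomp> lid C)"
    by (rule L_interchange[symmetric]) (rule hom | simp)+
  thus "(a \<otimes> lid C) \<Zcomp> (ai \<otimes> lid C) = lid (A \<otimes>\<^sub>o C)" using assms(3) L_comp_id_left[OF L_id_hom[OF refl refl]] L_tensor_id by simp
  have "(lid C \<otimes> a) \<Zcomp> (lid C \<otimes> ai) = (lid C \<Zcomp> lid C) \<otimes> (a \<Zcomp> ai)"
    by (rule L_interchange[symmetric]) (rule hom | simp)+
  thus "(lid C \<otimes> a) \<Zcomp> (lid C \<otimes> ai) = lid (C \<otimes>\<^sub>o A)" using assms(3) L_comp_id_left[OF L_id_hom[OF refl refl]] L_tensor_id by simp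
qed

lemma L_sym_unit_left_natural:
  assumes "k \<in> Lhom K (lUnit S)" "u \<in> Lhom A A'"
  shows "lSym S K A \<Zcomp> (u \<otimes> k) = k \<otimes> u"
proof -
  have "(k \<otimes> u) \<Zcomp> lSym S (lUnit S) A' = lSym S K A \<Zcomp> (u \<otimes> k)"
    by (rule L_sym_natural[OF assms])
  moreover have "k \<otimes> u \<in> Lhom (K \<otimes>\<^sub>o A) A'" by (rule hom_intros assms | simp)+
  ultimately show ?thesis using L_sym_unit_left L_comp_id_right by metis
qed

lemma L_sym_unit_right_natural:
  assumes "k \<in> Lhom A (lUnit S)" "u \<in> Lhom K K'"
  shows "lSym S K A \<Zcomp> (k \<otimes> u) = u \<otimes> k"
proof -
  have "(u \<otimes> k) \<Zcomp> lSym S K' (lUnit S) = lSym S K A \<Zcomp> (k \<otimes> u)"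
    by (rule L_sym_natural[OF assms(2,1)])
  moreover have "u \<otimes> k \<in> Lhom (K \<otimes>\<^sub>o A) K'" by (rule hom_intros assms | simp)+
  ultimately show ?thesis using L_sym_unit_right L_comp_id_right by metis
qed

lemma mF_term_snd: "mF S (cTrm S) Y \<Zcomp> Fm (\<pi>\<^sub>2 (cTrm S) Y) = mF1i S \<otimes> lid (Fo Y)"
proof -
  note hom = hom_intros
  have "mF1i S \<otimes> lid (Fo Y) = (mF1i S \<otimes> lid (Fo Y)) \<Zcomp> lid (Fo Y)"
    by (rule L_comp_id_right[symmetric]) (rule hom | simp)+
  also have "... = (mF1i S \<otimes> lid (Fo Y)) \<Zcomp> ((mF1 S \<otimes> lid (Fo Y)) \<Zcomp> mF S (cTrm S) Y \<Zcomp> Fm (\<pi>\<^sub>2 (cTrm S) Y))"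
    by (simp only: mF_unit_left)
  also have "... = (mF1i S \<otimes> lid (Fo Y)) \<Zcomp> ((mF1 S \<otimes> lid (Fo Y)) \<Zcomp> (mF S (cTrm S) Y \<Zcomp> Fm (\<pi>\<^sub>2 (cTrm S) Y)))"
    by (subst L_comp_assoc) (rule hom | simp)+
  also have "... = (mF1i S \<otimes> lid (Fo Y)) \<Zcomp> (mF1 S \<otimes> lid (Fo Y)) \<Zcomp> (mF S (cTrm S) Y \<Zcomp> Fm (\<pi>\<^sub>2 (cTrm S) Y))"
    by (rule L_comp_assoc[symmetric]) (rule hom | simp)+
  also have "(mF1i S \<otimes> lid (Fo Y)) \<Zcomp> (mF1 S \<otimes> lid (Fo Y)) = (mF1i S \<Zcomp> mF1 S) \<otimes> (lid (Fo Y) \<Zcomp> lid (Fo Y))"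
    by (rule L_interchange[symmetric]) (rule hom | simp)+
  also have "... = lid (Fo (cTrm S) \<otimes>\<^sub>o Fo Y)" by (simp add: mF1i_mF1 L_comp_id_left[OF L_id_hom] L_tensor_id)
  also have "lid (Fo (cTrm S) \<otimes>\<^sub>o Fo Y) \<Zcomp> (mF S (cTrm S) Y \<Zcomp> Fm (\<pi>\<^sub>2 (cTrm S) Y)) = mF S (cTrm S) Y \<Zcomp> Fm (\<pi>\<^sub>2 (cTrm S) Y)"
    by (rule L_comp_id_left) (rule hom | simp)+
  finally show ?thesis ..
qed

lemma mF_term_fst: "mF S X (cTrm S) \<Zcomp> Fm (\<pi>\<^sub>1 X (cTrm S)) = lid (Fo X) \<otimes> mF1i S"
proof -
  note hom = hom_intros
  have "lid (Fo X) \<otimes> mF1i S = (lid (Fo X) \<otimes> mF1i S) \<Zcomp> lid (Fo X)"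
    by (rule L_comp_id_right[symmetric]) (rule hom | simp)+
  also have "... = (lid (Fo X) \<otimes> mF1i S) \<Zcomp> ((lid (Fo X) \<otimes> mF1 S) \<Zcomp> mF S X (cTrm S) \<Zcomp> Fm (\<pi>\<^sub>1 X (cTrm S)))"
    by (simp only: mF_unit_right)
  also have "... = (lid (Fo X) \<otimes> mF1i S) \<Zcomp> ((lid (Fo X) \<otimes> mF1 S) \<Zcomp> (mF S X (cTrm S) \<Zcomp> Fm (\<pi>\<^sub>1 X (cTrm S))))"
    by (subst L_comp_assoc) (rule hom | simp)+
  also have "... = (lid (Fo X) \<otimes> mF1i S) \<Zcomp> (lid (Fo X) \<otimes> mF1 S) \<Zcomp> (mF S X (cTrm S) \<Zcomp> Fm (\<pi>\<^sub>1 X (cTrm S)))"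
    by (rule L_comp_assoc[symmetric]) (rule hom | simp)+
  also have "(lid (Fo X) \<otimes> mF1i S) \<Zcomp> (lid (Fo X) \<otimes> mF1 S) = (lid (Fo X) \<Zcomp> lid (Fo X)) \<otimes> (mF1i S \<Zcomp> mF1 S)"
    by (rule L_interchange[symmetric]) (rule hom | simp)+
  also have "... = lid (Fo X \<otimes>\<^sub>o Fo (cTrm S))" by (simp add: mF1i_mF1 L_comp_id_left[OF L_id_hom] L_tensor_id)
  also have "lid (Fo X \<otimes>\<^sub>o Fo (cTrm S)) \<Zcomp> (mF S X (cTrm S) \<Zcomp> Fm (\<pi>\<^sub>1 X (cTrm S))) = mF S X (cTrm S) \<Zcomp> Fm (\<pi>\<^sub>1 X (cTrm S))"
    by (rule L_comp_id_left) (rule hom | simp)+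
  finally show ?thesis ..
qed

lemma mF_snd: "mF S X Y \<Zcomp> Fm (\<pi>\<^sub>2 X Y) = wk X \<otimes> lid (Fo Y)"
proof -
  note hom = hom_intros
  define P where "P = prodC S X Y (cBang S X) (cid Y)"
  have Pty: "P \<in> Chom (X \<times>\<^sub>C Y) (cTrm S \<times>\<^sub>C Y)" unfolding P_def by (rule hom | simp)+
  note hom = hom Pty
  have pp: "P \<Zcomp>\<^sub>C \<pi>\<^sub>2 (cTrm S) Y = \<pi>\<^sub>2 X Y" unfolding P_def
    by (subst prodC_snd, (rule hom | simp)+, rule C_comp_id_right, (rule hom | simp)+)
  have "mF S X Y \<Zcomp> Fm (\<pi>\<^sub>2 X Y) = mF S X Y \<Zcomp> Fm (P \<Zcomp>\<^sub>C \<pi>\<^sub>2 (cTrm S) Y)" by (simp only: pp)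
  also have "... = mF S X Y \<Zcomp> (Fm P \<Zcomp> Fm (\<pi>\<^sub>2 (cTrm S) Y))" by (subst F_comp) (rule hom | simp)+
  also have "... = mF S X Y \<Zcomp> Fm P \<Zcomp> Fm (\<pi>\<^sub>2 (cTrm S) Y)" by (rule L_comp_assoc[symmetric]) (rule hom | simp)+
  also have "mF S X Y \<Zcomp> Fm P = (Fm (cBang S X) \<otimes> Fm (cid Y)) \<Zcomp> mF S (cTrm S) Y"
    unfolding P_def by (rule mF_natural[symmetric]) (rule hom | simp)+
  also have "(Fm (cBang S X) \<otimes> Fm (cid Y)) \<Zcomp> mF S (cTrm S) Y \<Zcomp> Fm (\<pi>\<^sub>2 (cTrm S) Y)
     = (Fm (cBang S X) \<otimes> Fm (cid Y)) \<Zcomp> (mF S (cTrm S) Y \<Zcomp> Fm (\<pi>\<^sub>2 (cTrm S) Y))"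
    by (rule L_comp_assoc) (rule hom | simp)+
  also have "... = (Fm (cBang S X) \<otimes> lid (Fo Y)) \<Zcomp> (mF1i S \<otimes> lid (Fo Y))"
    by (simp only: mF_term_snd F_id)
  also have "... = (Fm (cBang S X) \<Zcomp> mF1i S) \<otimes> (lid (Fo Y) \<Zcomp> lid (Fo Y))"
    by (rule L_interchange[symmetric]) (rule hom | simp)+
  also have "... = wk X \<otimes> lid (Fo Y)" unfolding weak_def by (subst L_comp_id_left) (rule hom | simp)+
  finally show ?thesis .
qed

lemma mF_fst: "mF S X Y \<Zcomp> Fm (\<pi>\<^sub>1 X Y) = lid (Fo X) \<otimes> wk Y"
proof -
  note hom = hom_intros
  define P where "P = prodC S X Y (cid X) (cBang S Y)"
  have Pty: "P \<in> Chom (X \<times>\<^sub>C Y) (X \<times>\<^sub>C cTrm S)" unfolding P_def by (rule hom | simp)+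
  note hom = hom Pty
  have pp: "P \<Zcomp>\<^sub>C \<pi>\<^sub>1 X (cTrm S) = \<pi>\<^sub>1 X Y" unfolding P_def
    by (subst prodC_fst, (rule hom | simp)+, rule C_comp_id_right, (rule hom | simp)+)
  have "mF S X Y \<Zcomp> Fm (\<pi>\<^sub>1 X Y) = mF S X Y \<Zcomp> Fm (P \<Zcomp>\<^sub>C \<pi>\<^sub>1 X (cTrm S))" by (simp only: pp)
  also have "... = mF S X Y \<Zcomp> (Fm P \<Zcomp> Fm (\<pi>\<^sub>1 X (cTrm S)))" by (subst F_comp) (rule hom | simp)+
  also have "... = mF S X Y \<Zcomp> Fm P \<Zcomp> Fm (\<pi>\<^sub>1 X (cTrm S))" by (rule L_comp_assoc[symmetric]) (rule hom | simp)+
  also have "mF S X Y \<Zcomp> Fm P = (Fm (cid X) \<otimes> Fm (cBang S Y)) \<Zcomp> mF S X (cTrm S)"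
    unfolding P_def by (rule mF_natural[symmetric]) (rule hom | simp)+
  also have "(Fm (cid X) \<otimes> Fm (cBang S Y)) \<Zcomp> mF S X (cTrm S) \<Zcomp> Fm (\<pi>\<^sub>1 X (cTrm S))
     = (Fm (cid X) \<otimes> Fm (cBang S Y)) \<Zcomp> (mF S X (cTrm S) \<Zcomp> Fm (\<pi>\<^sub>1 X (cTrm S)))"
    by (rule L_comp_assoc) (rule hom | simp)+
  also have "... = (lid (Fo X) \<otimes> Fm (cBang S Y)) \<Zcomp> (lid (Fo X) \<otimes> mF1i S)"
    by (simp only: mF_term_fst F_id)
  also have "... = (lid (Fo X) \<Zcomp> lid (Fo X)) \<otimes> (Fm (cBang S Y) \<Zcomp> mF1i S)"
    by (rule L_interchange[symmetric]) (rule hom | simp)+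
  also have "... = lid (Fo X) \<otimes> wk Y" unfolding weak_def by (subst L_comp_id_left) (rule hom | simp)+
  finally show ?thesis .
qed

lemma mFi_wk_snd: "mFi S X Y \<Zcomp> (wk X \<otimes> lid (Fo Y)) = Fm (\<pi>\<^sub>2 X Y)"
proof -
  note hom = hom_intros
  have "mFi S X Y \<Zcomp> (wk X \<otimes> lid (Fo Y)) = mFi S X Y \<Zcomp> (mF S X Y \<Zcomp> Fm (\<pi>\<^sub>2 X Y))" by (simp only: mF_snd)
  also have "... = mFi S X Y \<Zcomp> mF S X Y \<Zcomp> Fm (\<pi>\<^sub>2 X Y)" by (rule L_comp_assoc[symmetric]) (rule hom | simp)+
  also have "... = Fm (\<pi>\<^sub>2 X Y)" by (simp only: mFi_mF, rule L_comp_id_left) (rule hom | simp)+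
  finally show ?thesis .
qed

lemma mFi_wk_fst: "mFi S X Y \<Zcomp> (lid (Fo X) \<otimes> wk Y) = Fm (\<pi>\<^sub>1 X Y)"
proof -
  note hom = hom_intros
  have "mFi S X Y \<Zcomp> (lid (Fo X) \<otimes> wk Y) = mFi S X Y \<Zcomp> (mF S X Y \<Zcomp> Fm (\<pi>\<^sub>1 X Y))" by (simp only: mF_fst)
  also have "... = mFi S X Y \<Zcomp> mF S X Y \<Zcomp> Fm (\<pi>\<^sub>1 X Y)" by (rule L_comp_assoc[symmetric]) (rule hom | simp)+
  also have "... = Fm (\<pi>\<^sub>1 X Y)" by (simp only: mFi_mF, rule L_comp_id_left) (rule hom | simp)+
  finally show ?thesis .
qed

lemma mFi_natural: assumes "f \<in> Chom X X'" "g \<in> Chom Y Y'"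
  shows "Fm (prodC S X Y f g) \<Zcomp> mFi S X' Y' = mFi S X Y \<Zcomp> (Fm f \<otimes> Fm g)"
proof -
  note hom = hom_intros assms
  define P where "P = prodC S X Y f g"
  have Pty: "P \<in> Chom (X \<times>\<^sub>C Y) (X' \<times>\<^sub>C Y')" unfolding P_def by (rule hom | simp)+
  note hom = hom Pty
  have "Fm P = lid (Fo (X \<times>\<^sub>C Y)) \<Zcomp> Fm P" by (rule L_comp_id_left[symmetric]) (rule hom | simp)+
  also have "... = mFi S X Y \<Zcomp> mF S X Y \<Zcomp> Fm P" by (simp only: mFi_mF)
  also have "... = mFi S X Y \<Zcomp> (mF S X Y \<Zcomp> Fm P)" by (rule L_comp_assoc) (rule hom | simp)+
  also have "mF S X Y \<Zcomp> Fm P = (Fm f \<otimes> Fm g) \<Zcomp> mF S X' Y'" unfolding P_def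
    by (rule mF_natural[symmetric]) (rule hom | simp)+
  finally have e1: "Fm P = mFi S X Y \<Zcomp> ((Fm f \<otimes> Fm g) \<Zcomp> mF S X' Y')" .
  have "Fm P \<Zcomp> mFi S X' Y' = mFi S X Y \<Zcomp> ((Fm f \<otimes> Fm g) \<Zcomp> mF S X' Y') \<Zcomp> mFi S X' Y'"
    by (simp only: e1)
  also have "... = mFi S X Y \<Zcomp> ((Fm f \<otimes> Fm g) \<Zcomp> mF S X' Y' \<Zcomp> mFi S X' Y')"
    by (rule L_comp_assoc) (rule hom | simp)+
  also have "(Fm f \<otimes> Fm g) \<Zcomp> mF S X' Y' \<Zcomp> mFi S X' Y' = (Fm f \<otimes> Fm g) \<Zcomp> (mF S X' Y' \<Zcomp> mFi S X' Y')"
    by (rule L_comp_assoc) (rule hom | simp)+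
  also have "... = Fm f \<otimes> Fm g" by (simp only: mF_mFi, rule L_comp_id_right) (rule hom | simp)+
  finally show ?thesis unfolding P_def .
qed

lemma mFi_assoc:
  "Fm (assocC S X Y Z) \<Zcomp> (mFi S X (Y \<times>\<^sub>C Z) \<Zcomp> (lid (Fo X) \<otimes> mFi S Y Z))
   = mFi S (X \<times>\<^sub>C Y) Z \<Zcomp> (mFi S X Y \<otimes> lid (Fo Z))"
proof -
  note hom = hom_intros
  define Lm where "Lm = (mF S X Y \<otimes> lid (Fo Z)) \<Zcomp> mF S (X \<times>\<^sub>C Y) Z"
  define Lmi where "Lmi = mFi S (X \<times>\<^sub>C Y) Z \<Zcomp> (mFi S X Y \<otimes> lid (Fo Z))"
  define Rm where "Rm = (lid (Fo X) \<otimes> mF S Y Z) \<Zcomp> mF S X (Y \<times>\<^sub>C Z)"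
  define Rmi where "Rmi = mFi S X (Y \<times>\<^sub>C Z) \<Zcomp> (lid (Fo X) \<otimes> mFi S Y Z)"
  have ty1: "Lm \<in> Lhom (Fo X \<otimes>\<^sub>o Fo Y \<otimes>\<^sub>o Fo Z) (Fo ((X \<times>\<^sub>C Y) \<times>\<^sub>C Z))" unfolding Lm_def by (rule hom | simp)+
  have ty2: "Lmi \<in> Lhom (Fo ((X \<times>\<^sub>C Y) \<times>\<^sub>C Z)) (Fo X \<otimes>\<^sub>o Fo Y \<otimes>\<^sub>o Fo Z)" unfolding Lmi_def by (rule hom | simp)+
  have ty3: "Rm \<in> Lhom (Fo X \<otimes>\<^sub>o Fo Y \<otimes>\<^sub>o Fo Z) (Fo (X \<times>\<^sub>C Y \<times>\<^sub>C Z))" unfolding Rm_def by (rule hom | simp)+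
  have ty4: "Rmi \<in> Lhom (Fo (X \<times>\<^sub>C Y \<times>\<^sub>C Z)) (Fo X \<otimes>\<^sub>o Fo Y \<otimes>\<^sub>o Fo Z)" unfolding Rmi_def by (rule hom | simp)+
  note hom = hom ty1 ty2 ty3 ty4
  have i1: "Lm \<Zcomp> Lmi = lid ((Fo X \<otimes>\<^sub>o Fo Y) \<otimes>\<^sub>o Fo Z)" unfolding Lm_def Lmi_def
    by (rule L_iso_comp) (rule hom L_tensor_iso mF_mFi mFi_mF | simp)+
  have i2: "Lmi \<Zcomp> Lm = lid (Fo ((X \<times>\<^sub>C Y) \<times>\<^sub>C Z))" unfolding Lm_def Lmi_def
    by (rule L_iso_comp) (rule hom L_tensor_iso mF_mFi mFi_mF | simp)+
  have i3: "Rm \<Zcomp> Rmi = lid (Fo X \<otimes>\<^sub>o Fo Y \<otimes>\<^sub>o Fo Z)" unfolding Rm_def Rmi_def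
    by (rule L_iso_comp) (rule hom L_tensor_iso mF_mFi mFi_mF | simp)+
  have ma: "Lm \<Zcomp> Fm (assocC S X Y Z) = Rm" unfolding Lm_def Rm_def by (rule mF_assoc)
  have "Fm (assocC S X Y Z) \<Zcomp> Rmi = Lmi"
  proof (rule L_iso_cancel_left[where a = Lm and ai = Lmi])
    have "Lm \<Zcomp> (Fm (assocC S X Y Z) \<Zcomp> Rmi) = Lm \<Zcomp> Fm (assocC S X Y Z) \<Zcomp> Rmi"
      by (rule L_comp_assoc[symmetric]) (rule hom | simp)+
    thus "Lm \<Zcomp> (Fm (assocC S X Y Z) \<Zcomp> Rmi) = Lm \<Zcomp> Lmi" using ma i1 i3 by simp
  qed (rule hom i2 | simp)+
  thus ?thesis unfolding Rmi_def Lmi_def .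
qed

lemma mF_unit_left_wk:
  "(mF1 S \<otimes> lid (Fo Y)) \<Zcomp> mF S (cTrm S) Y \<Zcomp> Fm (\<pi>\<^sub>1 (cTrm S) Y) \<Zcomp> mF1i S = wk Y"
proof -
  note hom = hom_intros
  have m: "mF1 S \<in> Lhom (lUnit S) (Fo (cTrm S))" and w: "wk Y \<in> Lhom (Fo Y) (lUnit S)"
    by (rule hom | simp)+
  have "(mF1 S \<otimes> lid (Fo Y)) \<Zcomp> mF S (cTrm S) Y \<Zcomp> Fm (\<pi>\<^sub>1 (cTrm S) Y)
      = (mF1 S \<otimes> lid (Fo Y)) \<Zcomp> (lid (Fo (cTrm S)) \<otimes> wk Y)"
    unfolding mF_fst[symmetric] by (rule L_comp_assoc) (rule hom | simp)+
  also have "... = mF1 S \<otimes> wk Y"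
    using L_interchange[OF m L_id_hom[OF refl refl] L_id_hom[OF refl refl] w]
    by (simp add: L_comp_id_right[OF m] L_comp_id_left[OF w])
  also have "... = wk Y \<Zcomp> mF1 S"
    using L_tensor_split_right_first[OF m w] by (simp add: L_tensor_unit_left[OF w] L_tensor_unit_right[OF m])
  finally show ?thesis
    using L_comp_assoc[OF w m mF1i_hom[OF refl refl]] by (simp add: mF1_mF1i L_comp_id_right[OF w])
qed

lemma mF_snd_whisker:
  assumes "g \<in> Lhom (Fo Y \<otimes>\<^sub>o B) C"
  shows "(mF S X Y \<otimes> lid B) \<Zcomp> ((Fm (\<pi>\<^sub>2 X Y) \<otimes> lid B) \<Zcomp> g) = wk X \<otimes> g"
proof -
  note hom = hom_intros assms
  have "(mF S X Y \<otimes> lid B) \<Zcomp> ((Fm (\<pi>\<^sub>2 X Y) \<otimes> lid B) \<Zcomp> g)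
      = ((mF S X Y \<Zcomp> Fm (\<pi>\<^sub>2 X Y)) \<otimes> (lid B \<Zcomp> lid B)) \<Zcomp> g"
    by (subst L_interchange, (rule hom | simp)+, rule L_comp_assoc[symmetric]) (rule hom | simp)+
  also have "... = (wk X \<otimes> lid (Fo Y \<otimes>\<^sub>o B)) \<Zcomp> g"
    unfolding mF_snd L_comp_id_left[OF L_id_hom[OF refl refl]] L_tensor_id[symmetric]
    by (subst L_tensor_assoc) (rule hom | simp)+
  also have "... = wk X \<otimes> g" by (rule L_tensor_absorb_left[symmetric]) (rule hom | simp)+
  finally show ?thesis .
qed

lemma eta_term_mF1i: "\<eta> (cTrm S) \<Zcomp>\<^sub>C Um (mF1i S) = nU1 S"
proof -
  note hom = hom_intros
  have "\<eta> (cTrm S) \<Zcomp>\<^sub>C Um (mF1i S) = nU1 S \<Zcomp>\<^sub>C Um (mF1 S) \<Zcomp>\<^sub>C Um (mF1i S)" using nU1_mF1 by simp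
  also have "... = nU1 S \<Zcomp>\<^sub>C (Um (mF1 S) \<Zcomp>\<^sub>C Um (mF1i S))" by (rule C_comp_assoc) (rule hom | simp)+
  also have "Um (mF1 S) \<Zcomp>\<^sub>C Um (mF1i S) = cid (Uo (lUnit S))"
    by (subst U_comp[symmetric], (rule hom | simp)+) (simp add: mF1_mF1i U_id)
  finally show ?thesis by (simp add: C_comp_id_right[OF nU1_hom[OF refl refl]])
qed

section \<open>Weakening and contraction\<close>

lemma wk_natural: assumes "f \<in> Chom X Y" shows "Fm f \<Zcomp> wk Y = wk X"
proof -
  note hom = hom_intros assms
  have "Fm f \<Zcomp> wk Y = Fm f \<Zcomp> Fm (cBang S Y) \<Zcomp> mF1i S"
    unfolding weak_def by (rule L_comp_assoc[symmetric]) (rule hom | simp)+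
  also have "... = Fm (f \<Zcomp>\<^sub>C cBang S Y) \<Zcomp> mF1i S" by (subst F_comp) (rule hom | simp)+
  also have "f \<Zcomp>\<^sub>C cBang S Y = cBang S X" by (rule C_term_unique) (rule hom | simp)+
  finally show ?thesis unfolding weak_def .
qed

lemma ctr_counit_left: "ctr X \<Zcomp> (wk X \<otimes> lid (Fo X)) = lid (Fo X)"
proof -
  note hom = hom_intros
  have "ctr X \<Zcomp> (wk X \<otimes> lid (Fo X)) = Fm (diagC S X) \<Zcomp> (mFi S X X \<Zcomp> (wk X \<otimes> lid (Fo X)))"
    unfolding contr_def by (rule L_comp_assoc) (rule hom | simp)+
  also have "... = Fm (diagC S X) \<Zcomp> Fm (\<pi>\<^sub>2 X X)" by (simp only: mFi_wk_snd)
  also have "... = Fm (diagC S X \<Zcomp>\<^sub>C \<pi>\<^sub>2 X X)" by (rule F_comp[symmetric]) (rule hom | simp)+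
  also have "diagC S X \<Zcomp>\<^sub>C \<pi>\<^sub>2 X X = cid X" unfolding diagC_def by (rule C_pair_snd) (rule hom | simp)+
  finally show ?thesis by (simp add: F_id)
qed

lemma ctr_counit_right: "ctr X \<Zcomp> (lid (Fo X) \<otimes> wk X) = lid (Fo X)"
proof -
  note hom = hom_intros
  have "ctr X \<Zcomp> (lid (Fo X) \<otimes> wk X) = Fm (diagC S X) \<Zcomp> (mFi S X X \<Zcomp> (lid (Fo X) \<otimes> wk X))"
    unfolding contr_def by (rule L_comp_assoc) (rule hom | simp)+
  also have "... = Fm (diagC S X) \<Zcomp> Fm (\<pi>\<^sub>1 X X)" by (simp only: mFi_wk_fst)
  also have "... = Fm (diagC S X \<Zcomp>\<^sub>C \<pi>\<^sub>1 X X)" by (rule F_comp[symmetric]) (rule hom | simp)+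
  also have "diagC S X \<Zcomp>\<^sub>C \<pi>\<^sub>1 X X = cid X" unfolding diagC_def by (rule C_pair_fst) (rule hom | simp)+
  finally show ?thesis by (simp add: F_id)
qed

lemma ctr_wk_wk: "ctr X \<Zcomp> (wk X \<otimes> wk X) = wk X"
proof -
  have w: "wk X \<in> Lhom (Fo X) (lUnit S)" by (rule wk_hom) simp_all
  have "ctr X \<Zcomp> (wk X \<otimes> wk X) = ctr X \<Zcomp> (lid (Fo X) \<otimes> wk X) \<Zcomp> wk X"
    unfolding L_tensor_absorb_right[OF w w] by (rule L_comp_assoc[symmetric]) (rule hom_intros | simp)+
  then show ?thesis by (simp add: ctr_counit_right L_comp_id_left[OF w])
qed

lemma ctr_pair:
  assumes "f \<in> Chom X Y" "g \<in> Chom X Z"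
  shows "ctr X \<Zcomp> (Fm f \<otimes> Fm g) = Fm (cTup S f g) \<Zcomp> mFi S Y Z"
proof -
  note hom = hom_intros assms
  have "ctr X \<Zcomp> (Fm f \<otimes> Fm g) = Fm (diagC S X) \<Zcomp> (mFi S X X \<Zcomp> (Fm f \<otimes> Fm g))"
    unfolding contr_def by (rule L_comp_assoc) (rule hom | simp)+
  also have "mFi S X X \<Zcomp> (Fm f \<otimes> Fm g) = Fm (prodC S X X f g) \<Zcomp> mFi S Y Z"
    by (rule mFi_natural[symmetric]) (rule hom)+
  also have "Fm (diagC S X) \<Zcomp> (Fm (prodC S X X f g) \<Zcomp> mFi S Y Z)
      = Fm (diagC S X \<Zcomp>\<^sub>C prodC S X X f g) \<Zcomp> mFi S Y Z"
    by (subst F_comp, (rule hom | simp)+, rule L_comp_assoc[symmetric]) (rule hom | simp)+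
  also have "diagC S X \<Zcomp>\<^sub>C prodC S X X f g = cTup S f g" by (rule diagC_comp_prodC) (rule hom)+
  finally show ?thesis .
qed

lemma ctr_natural: assumes "f \<in> Chom X Y"
  shows "Fm f \<Zcomp> ctr Y = ctr X \<Zcomp> (Fm f \<otimes> Fm f)"
proof -
  note hom = hom_intros assms
  have "Fm f \<Zcomp> ctr Y = Fm (f \<Zcomp>\<^sub>C diagC S Y) \<Zcomp> mFi S Y Y"
    unfolding contr_def by (subst F_comp, (rule hom | simp)+, rule L_comp_assoc[symmetric]) (rule hom | simp)+
  then show ?thesis using C_comp_diag[OF assms] ctr_pair[OF assms assms] by simp
qed

lemma ctr_tensor_id_split:
  "ctr X \<otimes> lid (Fo X) = (Fm (diagC S X) \<otimes> Fm (cid X)) \<Zcomp> (mFi S X X \<otimes> lid (Fo X))"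
  "lid (Fo X) \<otimes> ctr X = (Fm (cid X) \<otimes> Fm (diagC S X)) \<Zcomp> (lid (Fo X) \<otimes> mFi S X X)"
proof -
  have "(Fm (diagC S X) \<otimes> lid (Fo X)) \<Zcomp> (mFi S X X \<otimes> lid (Fo X))
      = (Fm (diagC S X) \<Zcomp> mFi S X X) \<otimes> (lid (Fo X) \<Zcomp> lid (Fo X))"
    by (rule L_interchange[symmetric]) (rule hom_intros | simp)+
  then show "ctr X \<otimes> lid (Fo X) = (Fm (diagC S X) \<otimes> Fm (cid X)) \<Zcomp> (mFi S X X \<otimes> lid (Fo X))"
    unfolding contr_def F_id using L_comp_id_left[OF L_id_hom[OF refl refl]] by simp
  have "(lid (Fo X) \<otimes> Fm (diagC S X)) \<Zcomp> (lid (Fo X) \<otimes> mFi S X X)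
      = (lid (Fo X) \<Zcomp> lid (Fo X)) \<otimes> (Fm (diagC S X) \<Zcomp> mFi S X X)"
    by (rule L_interchange[symmetric]) (rule hom_intros | simp)+
  then show "lid (Fo X) \<otimes> ctr X = (Fm (cid X) \<otimes> Fm (diagC S X)) \<Zcomp> (lid (Fo X) \<otimes> mFi S X X)"
    unfolding contr_def F_id using L_comp_id_left[OF L_id_hom[OF refl refl]] by simp
qed

lemma ctr_coassoc: "ctr X \<Zcomp> (ctr X \<otimes> lid (Fo X)) = ctr X \<Zcomp> (lid (Fo X) \<otimes> ctr X)"
proof -
  note hom = hom_intros
  let ?D = "diagC S X"
  have "ctr X \<Zcomp> (ctr X \<otimes> lid (Fo X)) = ctr X \<Zcomp> (Fm ?D \<otimes> Fm (cid X)) \<Zcomp> (mFi S X X \<otimes> lid (Fo X))"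
    unfolding ctr_tensor_id_split by (rule L_comp_assoc[symmetric]) (rule hom | simp)+
  also have "ctr X \<Zcomp> (Fm ?D \<otimes> Fm (cid X)) = Fm (cTup S ?D (cid X)) \<Zcomp> mFi S (X \<times>\<^sub>C X) X"
    by (rule ctr_pair) (rule hom | simp)+
  also have "Fm (cTup S ?D (cid X)) \<Zcomp> mFi S (X \<times>\<^sub>C X) X \<Zcomp> (mFi S X X \<otimes> lid (Fo X))
      = Fm (cTup S ?D (cid X)) \<Zcomp> (mFi S (X \<times>\<^sub>C X) X \<Zcomp> (mFi S X X \<otimes> lid (Fo X)))"
    by (rule L_comp_assoc) (rule hom | simp)+
  finally have left: "ctr X \<Zcomp> (ctr X \<otimes> lid (Fo X)) = ..." .
  have "ctr X \<Zcomp> (lid (Fo X) \<otimes> ctr X) = ctr X \<Zcomp> (Fm (cid X) \<otimes> Fm ?D) \<Zcomp> (lid (Fo X) \<otimes> mFi S X X)"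
    unfolding ctr_tensor_id_split by (rule L_comp_assoc[symmetric]) (rule hom | simp)+
  also have "ctr X \<Zcomp> (Fm (cid X) \<otimes> Fm ?D) = Fm (cTup S (cid X) ?D) \<Zcomp> mFi S X (X \<times>\<^sub>C X)"
    by (rule ctr_pair) (rule hom | simp)+
  also have "Fm (cTup S (cid X) ?D) = Fm (cTup S ?D (cid X)) \<Zcomp> Fm (assocC S X X X)"
    unfolding assocC_diag[symmetric] by (rule F_comp) (rule hom | simp)+
  also have "Fm (cTup S ?D (cid X)) \<Zcomp> Fm (assocC S X X X) \<Zcomp> mFi S X (X \<times>\<^sub>C X) \<Zcomp> (lid (Fo X) \<otimes> mFi S X X)
      = Fm (cTup S ?D (cid X)) \<Zcomp> (Fm (assocC S X X X) \<Zcomp> (mFi S X (X \<times>\<^sub>C X) \<Zcomp> (lid (Fo X) \<otimes> mFi S X X)))"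
    by (subst L_comp_assoc, (rule hom | simp)+)+
  finally show ?thesis unfolding left mFi_assoc by (rule sym)
qed

lemma ctr_counit_left_whisker: "(ctr X \<otimes> lid A) \<Zcomp> ((wk X \<otimes> lid (Fo X)) \<otimes> lid A) = lid (Fo X \<otimes>\<^sub>o A)"
proof -
  note hom = hom_intros
  have "(ctr X \<otimes> lid A) \<Zcomp> ((wk X \<otimes> lid (Fo X)) \<otimes> lid A) = (ctr X \<Zcomp> (wk X \<otimes> lid (Fo X))) \<otimes> (lid A \<Zcomp> lid A)"
    by (rule L_interchange[symmetric]) (rule hom | simp)+
  thus ?thesis using ctr_counit_left L_comp_id_left[OF L_id_hom[OF refl refl]] L_tensor_id by simp
qed

lemma ctr_counit_right_whisker: "(ctr X \<otimes> lid A) \<Zcomp> ((lid (Fo X) \<otimes> wk X) \<otimes> lid A) = lid (Fo X \<otimes>\<^sub>o A)"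
proof -
  note hom = hom_intros
  have "(ctr X \<otimes> lid A) \<Zcomp> ((lid (Fo X) \<otimes> wk X) \<otimes> lid A) = (ctr X \<Zcomp> (lid (Fo X) \<otimes> wk X)) \<otimes> (lid A \<Zcomp> lid A)"
    by (rule L_interchange[symmetric]) (rule hom | simp)+
  thus ?thesis using ctr_counit_right L_comp_id_left[OF L_id_hom[OF refl refl]] L_tensor_id by simp
qed

lemma ctr_tensor_wk: assumes "e \<in> Lhom (Fo X) B" shows "ctr X \<Zcomp> (e \<otimes> wk X) = e"
proof -
  note hom = hom_intros assms
  have "ctr X \<Zcomp> (e \<otimes> wk X) = ctr X \<Zcomp> ((lid (Fo X) \<otimes> wk X) \<Zcomp> e)"
    by (subst L_tensor_absorb_right) (rule hom | simp)+
  also have "... = ctr X \<Zcomp> (lid (Fo X) \<otimes> wk X) \<Zcomp> e" by (rule L_comp_assoc[symmetric]) (rule hom | simp)+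
  also have "... = e" by (simp only: ctr_counit_right, rule L_comp_id_left) (rule hom | simp)+
  finally show ?thesis .
qed

lemma ctr_coassoc_whisker:
  "(ctr X \<otimes> lid A) \<Zcomp> (lid (Fo X) \<otimes> ctr X \<otimes> lid A) = (ctr X \<otimes> lid A) \<Zcomp> (ctr X \<otimes> lid (Fo X \<otimes>\<^sub>o A))"
proof -
  note hom = hom_intros
  have "(ctr X \<otimes> lid A) \<Zcomp> (lid (Fo X) \<otimes> ctr X \<otimes> lid A) = (ctr X \<otimes> lid A) \<Zcomp> ((lid (Fo X) \<otimes> ctr X) \<otimes> lid A)"
    by (subst L_tensor_assoc) (rule hom | simp)+
  also have "... = (ctr X \<Zcomp> (lid (Fo X) \<otimes> ctr X)) \<otimes> (lid A \<Zcomp> lid A)"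
    by (rule L_interchange[symmetric]) (rule hom | simp)+
  also have "... = (ctr X \<otimes> lid A) \<Zcomp> ((ctr X \<otimes> lid (Fo X)) \<otimes> lid A)"
    unfolding ctr_coassoc[symmetric] by (rule L_interchange) (rule hom | simp)+
  also have "(ctr X \<otimes> lid (Fo X)) \<otimes> lid A = ctr X \<otimes> lid (Fo X \<otimes>\<^sub>o A)"
    unfolding L_tensor_id[symmetric] by (rule L_tensor_assoc) (rule hom | simp)+
  finally show ?thesis .
qed

lemma ctr_natural_whisker:
  assumes "f \<in> Chom X Y" "u \<in> Lhom (Fo X \<otimes>\<^sub>o A) B"
  shows "(Fm f \<otimes> u) \<Zcomp> (ctr Y \<otimes> lid B) = (ctr X \<otimes> lid (Fo X \<otimes>\<^sub>o A)) \<Zcomp> ((Fm f \<otimes> Fm f) \<otimes> u)"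
proof -
  note hom = hom_intros assms
  have "(Fm f \<otimes> u) \<Zcomp> (ctr Y \<otimes> lid B) = (Fm f \<Zcomp> ctr Y) \<otimes> (u \<Zcomp> lid B)"
    by (rule L_interchange[symmetric]) (rule hom | simp)+
  also have "u \<Zcomp> lid B = lid (Fo X \<otimes>\<^sub>o A) \<Zcomp> u"
    using L_comp_id_right[OF assms(2)] L_comp_id_left[OF assms(2)] by simp
  also have "(Fm f \<Zcomp> ctr Y) \<otimes> (lid (Fo X \<otimes>\<^sub>o A) \<Zcomp> u) = (ctr X \<otimes> lid (Fo X \<otimes>\<^sub>o A)) \<Zcomp> ((Fm f \<otimes> Fm f) \<otimes> u)"
    unfolding ctr_natural[OF assms(1)] by (rule L_interchange) (rule hom | simp)+
  finally show ?thesis .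
qed

lemma ctr_sym_wk_cancel:
  "((lid (Fo X) \<otimes> ctr Y) \<otimes> lid B) \<Zcomp> (lSym S (Fo X) (Fo Y) \<otimes> lid (Fo Y \<otimes>\<^sub>o B))
     \<Zcomp> (wk Y \<otimes> lid (Fo X \<otimes>\<^sub>o Fo Y \<otimes>\<^sub>o B)) = lid (Fo X \<otimes>\<^sub>o Fo Y \<otimes>\<^sub>o B)"
proof -
  note hom = hom_intros
  have w: "wk Y \<in> Lhom (Fo Y) (lUnit S)" by (rule hom | simp)+
  have "(lSym S (Fo X) (Fo Y) \<otimes> lid (Fo Y \<otimes>\<^sub>o B)) \<Zcomp> (wk Y \<otimes> lid (Fo X \<otimes>\<^sub>o Fo Y \<otimes>\<^sub>o B))
      = (lSym S (Fo X) (Fo Y) \<Zcomp> (wk Y \<otimes> lid (Fo X))) \<otimes> (lid (Fo Y \<otimes>\<^sub>o B) \<Zcomp> lid (Fo Y \<otimes>\<^sub>o B))"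
    unfolding L_tensor_id[of "Fo X", symmetric]
    by (subst L_tensor_assoc[symmetric], (rule hom | simp)+, rule L_interchange[symmetric]) (rule hom | simp)+
  also have "... = (lid (Fo X) \<otimes> wk Y) \<otimes> lid (Fo Y \<otimes>\<^sub>o B)"
    unfolding L_sym_unit_right_natural[OF w L_id_hom[OF refl refl]] L_comp_id_left[OF L_id_hom[OF refl refl]] ..
  also have "... = (lid (Fo X) \<otimes> wk Y \<otimes> lid (Fo Y)) \<otimes> lid B"
    unfolding L_tensor_id[symmetric] by (subst L_tensor_assoc, (rule hom | simp)+)+
  finally have "((lid (Fo X) \<otimes> ctr Y) \<otimes> lid B) \<Zcomp> (lSym S (Fo X) (Fo Y) \<otimes> lid (Fo Y \<otimes>\<^sub>o B))
      \<Zcomp> (wk Y \<otimes> lid (Fo X \<otimes>\<^sub>o Fo Y \<otimes>\<^sub>o B))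
      = ((lid (Fo X) \<otimes> ctr Y) \<otimes> lid B) \<Zcomp> ((lid (Fo X) \<otimes> wk Y \<otimes> lid (Fo Y)) \<otimes> lid B)"
    by (subst L_comp_assoc) (rule hom | simp)+
  also have "... = ((lid (Fo X) \<Zcomp> lid (Fo X)) \<otimes> (ctr Y \<Zcomp> (wk Y \<otimes> lid (Fo Y)))) \<otimes> (lid B \<Zcomp> lid B)"
    by (subst L_interchange[symmetric], (rule hom | simp)+)+
  finally show ?thesis
    unfolding ctr_counit_left L_comp_id_left[OF L_id_hom[OF refl refl]] L_tensor_id by simp
qed

section \<open>The category LS(C)\<close>

lemma LShom_iff: "(f,u) \<in> LShom S (X,A) (Y,B) \<longleftrightarrow> f \<in> Chom X Y \<and> u \<in> Lhom (Fo X \<otimes>\<^sub>o A) B"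
  unfolding LShom_def by simp

lemma LScmp_Pair: "LScmp S (X,A) (f,u) (g,v) = (f \<Zcomp>\<^sub>C g, (ctr X \<otimes> lid A) \<Zcomp> (Fm f \<otimes> u) \<Zcomp> v)"
  unfolding LScmp_def by simp

lemma LScmp_hom: assumes "h \<in> LShom S P Q" "k \<in> LShom S Q R" shows "LScmp S P h k \<in> LShom S P R"
proof -
  obtain X A where P: "P = (X,A)" by (cases P)
  obtain Y B where Q: "Q = (Y,B)" by (cases Q)
  obtain Z C where R: "R = (Z,C)" by (cases R)
  obtain f u where h: "h = (f,u)" by (cases h)
  obtain g v where k: "k = (g,v)" by (cases k)
  have a: "f \<in> Chom X Y" "u \<in> Lhom (Fo X \<otimes>\<^sub>o A) B" "g \<in> Chom Y Z" "v \<in> Lhom (Fo Y \<otimes>\<^sub>o B) C"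
    using assms unfolding P Q R h k LShom_iff by auto
  note hom = hom_intros a
  show ?thesis unfolding P Q R h k LScmp_Pair LShom_iff by (rule conjI, (rule hom | simp)+)+
qed

lemma LScmp_wk_snd: assumes "f \<in> Chom X Y" "u \<in> Lhom (Fo X \<otimes>\<^sub>o A) B" "h \<in> Lhom B C"
  shows "(ctr X \<otimes> lid A) \<Zcomp> (Fm f \<otimes> u) \<Zcomp> (wk Y \<otimes> h) = u \<Zcomp> h"
proof -
  note hom = hom_intros assms
  have "(ctr X \<otimes> lid A) \<Zcomp> (Fm f \<otimes> u) \<Zcomp> (wk Y \<otimes> h) = (ctr X \<otimes> lid A) \<Zcomp> ((Fm f \<otimes> u) \<Zcomp> (wk Y \<otimes> h))"
    by (rule L_comp_assoc) (rule hom | simp)+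
  also have "(Fm f \<otimes> u) \<Zcomp> (wk Y \<otimes> h) = (Fm f \<Zcomp> wk Y) \<otimes> (u \<Zcomp> h)"
    by (rule L_interchange[symmetric]) (rule hom | simp)+
  also have "Fm f \<Zcomp> wk Y = wk X" by (rule wk_natural[OF assms(1)])
  also have "wk X \<otimes> (u \<Zcomp> h) = (wk X \<otimes> lid (Fo X \<otimes>\<^sub>o A)) \<Zcomp> (u \<Zcomp> h)"
    by (rule L_tensor_absorb_left) (rule hom | simp)+
  also have "lid (Fo X \<otimes>\<^sub>o A) = lid (Fo X) \<otimes> lid A" by (simp add: L_tensor_id)
  also have "wk X \<otimes> lid (Fo X) \<otimes> lid A = (wk X \<otimes> lid (Fo X)) \<otimes> lid A"
    by (rule L_tensor_assoc[symmetric]) (rule hom | simp)+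
  also have "(ctr X \<otimes> lid A) \<Zcomp> (((wk X \<otimes> lid (Fo X)) \<otimes> lid A) \<Zcomp> (u \<Zcomp> h))
     = (ctr X \<otimes> lid A) \<Zcomp> ((wk X \<otimes> lid (Fo X)) \<otimes> lid A) \<Zcomp> (u \<Zcomp> h)"
    by (rule L_comp_assoc[symmetric]) (rule hom | simp)+
  also have "... = u \<Zcomp> h" by (simp only: ctr_counit_left_whisker, rule L_comp_id_left) (rule hom | simp)+
  finally show ?thesis .
qed

lemma LScmp_id_left: assumes "h \<in> LShom S P Q" shows "LScmp S P (LSid S P) h = h"
proof -
  obtain X A where P: "P = (X,A)" by (cases P)
  obtain Y B where Q: "Q = (Y,B)" by (cases Q)
  obtain f u where h: "h = (f,u)" by (cases h)
  have a: "f \<in> Chom X Y" "u \<in> Lhom (Fo X \<otimes>\<^sub>o A) B" using assms unfolding P Q h LShom_iff by auto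
  note hom = hom_intros a
  have "Fm (cid X) \<otimes> wk X \<otimes> lid A = (lid (Fo X) \<otimes> wk X) \<otimes> lid A"
    unfolding F_id by (rule L_tensor_assoc[symmetric]) (rule hom | simp)+
  hence "(ctr X \<otimes> lid A) \<Zcomp> (Fm (cid X) \<otimes> wk X \<otimes> lid A) \<Zcomp> u = lid (Fo X \<otimes>\<^sub>o A) \<Zcomp> u"
    using ctr_counit_right_whisker by simp
  also have "... = u" by (rule L_comp_id_left) (rule hom | simp)+
  finally show ?thesis unfolding P h LSid_def using C_comp_id_left[OF a(1)] by (simp add: LScmp_Pair)
qed

lemma LScmp_assoc_Pair:
  assumes "f \<in> Chom X Y" "u \<in> Lhom (Fo X \<otimes>\<^sub>o A) B" "g \<in> Chom Y Z" "v \<in> Lhom (Fo Y \<otimes>\<^sub>o B) C"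
    "k \<in> Chom Z W" "x \<in> Lhom (Fo Z \<otimes>\<^sub>o C) D"
  shows "LScmp S (X,A) (LScmp S (X,A) (f,u) (g,v)) (k,x) = LScmp S (X,A) (f,u) (LScmp S (Y,B) (g,v) (k,x))"
proof -
  let ?a = "ctr X \<otimes> lid A" and ?b = "ctr X \<otimes> lid (Fo X \<otimes>\<^sub>o A)"
  let ?G = "Fm (f \<Zcomp>\<^sub>C g)" and ?K = "(Fm f \<otimes> u) \<Zcomp> v"
  have G: "?G \<in> Lhom (Fo X) (Fo Z)" and K: "?K \<in> Lhom (Fo X \<otimes>\<^sub>o Fo X \<otimes>\<^sub>o A) C"
    by (rule hom_intros assms | simp)+
  note hom = hom_intros assms G K
  have "snd (LScmp S (X,A) (LScmp S (X,A) (f,u) (g,v)) (k,x)) = ?a \<Zcomp> (?G \<otimes> (?a \<Zcomp> ?K)) \<Zcomp> x"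
    unfolding LScmp_Pair by (simp, subst L_comp_assoc) (rule hom | simp)+
  also have "?G \<otimes> (?a \<Zcomp> ?K) = (lid (Fo X) \<otimes> ?a) \<Zcomp> (?G \<otimes> ?K)"
    by (subst L_interchange[symmetric], (rule hom | simp)+, subst L_comp_id_left) (rule hom | simp)+
  also have "?a \<Zcomp> ((lid (Fo X) \<otimes> ?a) \<Zcomp> (?G \<otimes> ?K)) = ?a \<Zcomp> ?b \<Zcomp> (?G \<otimes> ?K)"
    unfolding ctr_coassoc_whisker[symmetric] by (rule L_comp_assoc[symmetric]) (rule hom | simp)+
  finally have left: "snd (LScmp S (X,A) (LScmp S (X,A) (f,u) (g,v)) (k,x)) = ?a \<Zcomp> ?b \<Zcomp> (?G \<otimes> ?K) \<Zcomp> x" .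
  have "snd (LScmp S (X,A) (f,u) (LScmp S (Y,B) (g,v) (k,x)))
      = ?a \<Zcomp> ((Fm f \<otimes> u) \<Zcomp> (ctr Y \<otimes> lid B)) \<Zcomp> (Fm g \<otimes> v) \<Zcomp> x"
    unfolding LScmp_Pair by (simp, (subst L_comp_assoc, (rule hom | simp)+)+)
  also have "(Fm f \<otimes> u) \<Zcomp> (ctr Y \<otimes> lid B) = ?b \<Zcomp> ((Fm f \<otimes> Fm f) \<otimes> u)"
    by (rule ctr_natural_whisker) (rule hom)+
  also have "?a \<Zcomp> (?b \<Zcomp> ((Fm f \<otimes> Fm f) \<otimes> u)) \<Zcomp> (Fm g \<otimes> v)
      = ?a \<Zcomp> ?b \<Zcomp> (((Fm f \<otimes> Fm f) \<otimes> u) \<Zcomp> (Fm g \<otimes> v))"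
    by (subst L_comp_assoc, (rule hom | simp)+)+
  also have "((Fm f \<otimes> Fm f) \<otimes> u) \<Zcomp> (Fm g \<otimes> v) = ?G \<otimes> ?K"
    by (subst L_tensor_assoc, (rule hom | simp)+, subst F_comp, (rule hom | simp)+)
      (rule L_interchange[symmetric]; (rule hom | simp)+)
  finally have right: "snd (LScmp S (X,A) (f,u) (LScmp S (Y,B) (g,v) (k,x))) = ?a \<Zcomp> ?b \<Zcomp> (?G \<otimes> ?K) \<Zcomp> x" .
  have "fst (LScmp S (X,A) (LScmp S (X,A) (f,u) (g,v)) (k,x)) = fst (LScmp S (X,A) (f,u) (LScmp S (Y,B) (g,v) (k,x)))"
    unfolding LScmp_Pair by (simp, rule C_comp_assoc) (rule hom)+
  with left right show ?thesis by (simp add: prod_eq_iff)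
qed

lemma LScmp_assoc:
  assumes "h \<in> LShom S P Q" "k \<in> LShom S Q R" "l \<in> LShom S R V"
  shows "LScmp S P (LScmp S P h k) l = LScmp S P h (LScmp S Q k l)"
  using assms LScmp_assoc_Pair unfolding LShom_def by (cases P, cases Q) auto

lemma LScmp_snd_indep: "snd (LScmp S P a (x1, v)) = snd (LScmp S P a (x2, v))"
  unfolding LScmp_def by simp

lemma LScmp_wk_const: assumes "u \<in> Lhom A B" "v \<in> Lhom B C"
  shows "LScmp S (X, A) (cid X, wk X \<otimes> u) (cid X, wk X \<otimes> v) = (cid X, wk X \<otimes> (u \<Zcomp> v))"
proof -
  note hom = hom_intros assms
  have "(ctr X \<otimes> lid A) \<Zcomp> (Fm (cid X) \<otimes> wk X \<otimes> u) \<Zcomp> (wk X \<otimes> v) = (wk X \<otimes> u) \<Zcomp> v"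
    by (rule LScmp_wk_snd) (rule hom | simp)+
  also have "... = wk X \<otimes> (u \<Zcomp> v)"
  proof -
    have "(wk X \<Zcomp> lid (lUnit S)) \<otimes> (u \<Zcomp> v) = (wk X \<otimes> u) \<Zcomp> (lid (lUnit S) \<otimes> v)" by (rule L_interchange) (rule hom | simp)+
    thus ?thesis using L_tensor_unit_left[OF assms(2)] L_comp_id_right[OF wk_hom[OF refl refl]] by simp
  qed
  finally show ?thesis unfolding LScmp_Pair using C_comp_id_left[OF C_id_hom[OF refl refl]] by simp
qed

lemma tenX_wk_const:
  assumes "u \<in> Lhom A A'" "v \<in> Lhom B B'"
  shows "tenX S X A B (cid X, wk X \<otimes> u) (cid X, wk X \<otimes> v) = (cid X, wk X \<otimes> u \<otimes> v)"
proof -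
  note hom = hom_intros assms
  let ?\<sigma> = "lSym S (Fo X) A"
  have "snd (tenX S X A B (cid X, wk X \<otimes> u) (cid X, wk X \<otimes> v))
      = (ctr X \<otimes> lid (A \<otimes>\<^sub>o B)) \<Zcomp> (((lid (Fo X) \<otimes> ?\<sigma>) \<otimes> lid B) \<Zcomp> ((wk X \<otimes> u) \<otimes> wk X \<otimes> v))"
    unfolding tenX_def by (simp, rule L_comp_assoc) (rule hom | simp)+
  also have "(lid (Fo X) \<otimes> ?\<sigma>) \<otimes> lid B = lid (Fo X) \<otimes> ?\<sigma> \<otimes> lid B"
    by (rule L_tensor_assoc) (rule hom | simp)+
  also have "(wk X \<otimes> u) \<otimes> wk X \<otimes> v = wk X \<otimes> (u \<otimes> wk X) \<otimes> v"
    by (subst L_tensor_assoc, (rule hom | simp)+)+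
  also have "(lid (Fo X) \<otimes> ?\<sigma> \<otimes> lid B) \<Zcomp> (wk X \<otimes> (u \<otimes> wk X) \<otimes> v)
      = (lid (Fo X) \<Zcomp> wk X) \<otimes> (?\<sigma> \<Zcomp> (u \<otimes> wk X)) \<otimes> (lid B \<Zcomp> v)"
    by (subst L_interchange[symmetric], (rule hom | simp)+)+
  also have "... = wk X \<otimes> (wk X \<otimes> u) \<otimes> v"
    using L_sym_unit_left_natural[OF wk_hom[OF refl refl] assms(1)]
    by (simp add: L_comp_id_left[OF wk_hom[OF refl refl]] L_comp_id_left[OF assms(2)])
  also have "... = (wk X \<otimes> wk X) \<otimes> u \<otimes> v"
    by (subst L_tensor_assoc, (rule hom | simp)+)+
  also have "(ctr X \<otimes> lid (A \<otimes>\<^sub>o B)) \<Zcomp> ((wk X \<otimes> wk X) \<otimes> u \<otimes> v) = wk X \<otimes> u \<otimes> v"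
    by (subst L_interchange[symmetric], (rule hom | simp)+)
      (simp add: ctr_wk_wk L_comp_id_left[OF L_tensor_hom[OF assms refl refl]])
  finally show ?thesis unfolding tenX_def by simp
qed

section \<open>The functor T and the differential\<close>

lemma phi_eq: "phi S X Y = (cid (X \<times>\<^sub>C Y), lTup S (TM S (\<pi>\<^sub>1 X Y)) (TM S (\<pi>\<^sub>2 X Y)))"
  unfolding phi_def LStup_def Tf_def by (simp add: C_pair_fst_snd)

lemma phi_iso: "LSiso S (X \<times>\<^sub>C Y, lam S (X \<times>\<^sub>C Y)) (X \<times>\<^sub>C Y, lBip S (lam S X) (lam S Y)) (phi S X Y)"
  using gdsc_axioms(10) unfolding t1_ax_def by blast

lemma phi_inverse:
  fixes X Y
  defines "Q \<equiv> (X \<times>\<^sub>C Y, lBip S (lam S X) (lam S Y))" and "P \<equiv> (X \<times>\<^sub>C Y, lam S (X \<times>\<^sub>C Y))"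
  shows "LSinv S P Q (phi S X Y) \<in> LShom S Q P \<and> LScmp S Q (LSinv S P Q (phi S X Y)) (phi S X Y) = LSid S Q"
proof -
  have "\<exists>k. k \<in> LShom S Q P \<and> LScmp S P (phi S X Y) k = LSid S P \<and> LScmp S Q k (phi S X Y) = LSid S Q"
    using phi_iso unfolding LSiso_def P_def Q_def by blast
  hence "LSinv S P Q (phi S X Y) \<in> LShom S Q P \<and> LScmp S P (phi S X Y) (LSinv S P Q (phi S X Y)) = LSid S P \<and>
      LScmp S Q (LSinv S P Q (phi S X Y)) (phi S X Y) = LSid S Q"
    unfolding LSinv_def by (rule someI_ex)
  thus ?thesis by blast
qed

lemma phi_hom: "phi S X Y \<in> LShom S (X \<times>\<^sub>C Y, lam S (X \<times>\<^sub>C Y)) (X \<times>\<^sub>C Y, lBip S (lam S X) (lam S Y))"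
  using phi_iso unfolding LSiso_def by blast

definition LSproj2 :: "'c \<Rightarrow> 'c \<Rightarrow> 'f \<times> 'g" where
  "LSproj2 X Y = (\<pi>\<^sub>2 X Y, wk (X \<times>\<^sub>C Y) \<otimes> lBp2 S (lam S X) (lam S Y))"

lemma LSproj2_hom: "LSproj2 X Y \<in> LShom S (X \<times>\<^sub>C Y, lBip S (lam S X) (lam S Y)) (Y, lam S Y)"
  unfolding LSproj2_def LShom_iff by (rule conjI, (rule hom_intros | simp)+)+

lemma phi_LSproj2: "LScmp S (X \<times>\<^sub>C Y, lam S (X \<times>\<^sub>C Y)) (phi S X Y) (LSproj2 X Y) = Tf S (\<pi>\<^sub>2 X Y)"
proof -
  note hom = hom_intros
  have "(ctr (X \<times>\<^sub>C Y) \<otimes> lid (lam S (X \<times>\<^sub>C Y))) \<Zcomp> (Fm (cid (X \<times>\<^sub>C Y)) \<otimes> lTup S (TM S (\<pi>\<^sub>1 X Y)) (TM S (\<pi>\<^sub>2 X Y))) \<Zcomp>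
          (wk (X \<times>\<^sub>C Y) \<otimes> lBp2 S (lam S X) (lam S Y)) = lTup S (TM S (\<pi>\<^sub>1 X Y)) (TM S (\<pi>\<^sub>2 X Y)) \<Zcomp> lBp2 S (lam S X) (lam S Y)"
    by (rule LScmp_wk_snd) (rule hom | simp)+
  also have "... = TM S (\<pi>\<^sub>2 X Y)" by (rule lTup_lBp2) (rule hom | simp)+
  finally show ?thesis unfolding phi_eq LSproj2_def LScmp_Pair Tf_def
    using C_comp_id_left[OF C_snd_hom[OF refl refl]] by simp
qed

lemma iota2_hom: "iota2 S (X \<times>\<^sub>C Y) (lam S X) (lam S Y) \<in> LShom S (X \<times>\<^sub>C Y, lam S Y) (X \<times>\<^sub>C Y, lBip S (lam S X) (lam S Y))"
  unfolding iota2_def LShom_iff by (rule conjI, (rule hom_intros | simp)+)+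

lemma i2_hom: "i2 S X Y \<in> LShom S (X \<times>\<^sub>C Y, lam S Y) (X \<times>\<^sub>C Y, lam S (X \<times>\<^sub>C Y))"
  unfolding i2_def by (rule LScmp_hom[OF iota2_hom], rule phi_inverse[THEN conjunct1])

lemma iota2_LSproj2:
  "LScmp S (X \<times>\<^sub>C Y, lam S Y) (iota2 S (X \<times>\<^sub>C Y) (lam S X) (lam S Y)) (LSproj2 X Y)
     = (\<pi>\<^sub>2 X Y, wk (X \<times>\<^sub>C Y) \<otimes> lid (lam S Y))"
proof -
  note hom = hom_intros
  let ?w = "wk (X \<times>\<^sub>C Y)" and ?i = "inj2 S (lam S X) (lam S Y)" and ?p = "lBp2 S (lam S X) (lam S Y)"
  have "(ctr (X \<times>\<^sub>C Y) \<otimes> lid (lam S Y)) \<Zcomp> (Fm (cid (X \<times>\<^sub>C Y)) \<otimes> ?w \<otimes> ?i) \<Zcomp> (?w \<otimes> ?p)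
      = (?w \<otimes> ?i) \<Zcomp> ?p"
    by (rule LScmp_wk_snd) (rule hom | simp)+
  also have "... = (?w \<Zcomp> lid (lUnit S)) \<otimes> (?i \<Zcomp> ?p)"
    by (subst L_interchange, (rule hom | simp)+, subst L_tensor_unit_left) (rule hom | simp)+
  also have "... = ?w \<otimes> lid (lam S Y)"
    by (simp add: inj2_lBp2 L_comp_id_right[OF wk_hom[OF refl refl]])
  finally show ?thesis
    unfolding iota2_def LSproj2_def LScmp_Pair using C_comp_id_left[OF C_snd_hom[OF refl refl]] by simp
qed

lemma i2_Tf_snd:
  "LScmp S (X \<times>\<^sub>C Y, lam S Y) (i2 S X Y) (Tf S (\<pi>\<^sub>2 X Y)) = (\<pi>\<^sub>2 X Y, wk (X \<times>\<^sub>C Y) \<otimes> lid (lam S Y))"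
proof -
  let ?R = "(X \<times>\<^sub>C Y, lam S Y)" and ?P = "(X \<times>\<^sub>C Y, lam S (X \<times>\<^sub>C Y))"
    and ?Q = "(X \<times>\<^sub>C Y, lBip S (lam S X) (lam S Y))"
  let ?\<iota> = "iota2 S (X \<times>\<^sub>C Y) (lam S X) (lam S Y)" and ?\<psi> = "LSinv S ?P ?Q (phi S X Y)"
  have \<psi>: "?\<psi> \<in> LShom S ?Q ?P" "LScmp S ?Q ?\<psi> (phi S X Y) = LSid S ?Q"
    using phi_inverse by auto
  have T: "Tf S (\<pi>\<^sub>2 X Y) \<in> LShom S ?P (Y, lam S Y)" by (rule Tf_hom, rule hom_intros | simp)+
  have "LScmp S ?R (i2 S X Y) (Tf S (\<pi>\<^sub>2 X Y)) = LScmp S ?R ?\<iota> (LScmp S ?Q ?\<psi> (Tf S (\<pi>\<^sub>2 X Y)))"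
    unfolding i2_def by (rule LScmp_assoc[OF iota2_hom \<psi>(1) T])
  also have "LScmp S ?Q ?\<psi> (Tf S (\<pi>\<^sub>2 X Y)) = LSproj2 X Y"
    unfolding phi_LSproj2[symmetric] LScmp_assoc[OF \<psi>(1) phi_hom LSproj2_hom, symmetric] \<psi>(2)
    by (rule LScmp_id_left[OF LSproj2_hom])
  finally show ?thesis unfolding iota2_LSproj2 .
qed

lemma D2_snd: "snd (D2 S X Y h) = snd (LScmp S (X \<times>\<^sub>C Y, lam S Y) (i2 S X Y) (Tf S h))"
  unfolding D2_def Dm_def Tf_def by (rule LScmp_snd_indep)

lemma D2_snd_comp: assumes "g \<in> Chom Y V"
  shows "snd (D2 S X Y (\<pi>\<^sub>2 X Y \<Zcomp>\<^sub>C g)) = (Fm (\<pi>\<^sub>2 X Y) \<otimes> lid (lam S Y)) \<Zcomp> TM S g"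
proof -
  note hom = hom_intros assms
  define R where "R = (X \<times>\<^sub>C Y, lam S Y)"
  define P where "P = (X \<times>\<^sub>C Y, lam S (X \<times>\<^sub>C Y))"
  have "snd (D2 S X Y (\<pi>\<^sub>2 X Y \<Zcomp>\<^sub>C g)) = snd (LScmp S R (i2 S X Y) (Tf S (\<pi>\<^sub>2 X Y \<Zcomp>\<^sub>C g)))"
    unfolding R_def by (rule D2_snd)
  also have "Tf S (\<pi>\<^sub>2 X Y \<Zcomp>\<^sub>C g) = LScmp S P (Tf S (\<pi>\<^sub>2 X Y)) (Tf S g)"
    unfolding P_def by (rule Tf_comp) (rule hom | simp)+
  also have "LScmp S R (i2 S X Y) (LScmp S P (Tf S (\<pi>\<^sub>2 X Y)) (Tf S g)) = LScmp S R (LScmp S R (i2 S X Y) (Tf S (\<pi>\<^sub>2 X Y))) (Tf S g)"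
    by (rule LScmp_assoc[symmetric]) (unfold R_def P_def, rule i2_hom, (rule Tf_hom, (rule hom | simp)+)+)
  also have "LScmp S R (i2 S X Y) (Tf S (\<pi>\<^sub>2 X Y)) = (\<pi>\<^sub>2 X Y, wk (X \<times>\<^sub>C Y) \<otimes> lid (lam S Y))"
    unfolding R_def by (rule i2_Tf_snd)
  also have "snd (LScmp S R (\<pi>\<^sub>2 X Y, wk (X \<times>\<^sub>C Y) \<otimes> lid (lam S Y)) (Tf S g))
     = (ctr (X \<times>\<^sub>C Y) \<otimes> lid (lam S Y)) \<Zcomp> (Fm (\<pi>\<^sub>2 X Y) \<otimes> wk (X \<times>\<^sub>C Y) \<otimes> lid (lam S Y)) \<Zcomp> TM S g"
    unfolding R_def Tf_def LScmp_Pair by simp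
  also have "Fm (\<pi>\<^sub>2 X Y) \<otimes> wk (X \<times>\<^sub>C Y) \<otimes> lid (lam S Y) = (Fm (\<pi>\<^sub>2 X Y) \<otimes> wk (X \<times>\<^sub>C Y)) \<otimes> lid (lam S Y)"
    by (rule L_tensor_assoc[symmetric]) (rule hom | simp)+
  also have "(ctr (X \<times>\<^sub>C Y) \<otimes> lid (lam S Y)) \<Zcomp> ((Fm (\<pi>\<^sub>2 X Y) \<otimes> wk (X \<times>\<^sub>C Y)) \<otimes> lid (lam S Y))
     = (ctr (X \<times>\<^sub>C Y) \<Zcomp> (Fm (\<pi>\<^sub>2 X Y) \<otimes> wk (X \<times>\<^sub>C Y))) \<otimes> (lid (lam S Y) \<Zcomp> lid (lam S Y))"
    by (rule L_interchange[symmetric]) (rule hom | simp)+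
  also have "ctr (X \<times>\<^sub>C Y) \<Zcomp> (Fm (\<pi>\<^sub>2 X Y) \<otimes> wk (X \<times>\<^sub>C Y)) = Fm (\<pi>\<^sub>2 X Y)" by (rule ctr_tensor_wk) (rule hom | simp)+
  also have "lid (lam S Y) \<Zcomp> lid (lam S Y) = lid (lam S Y)" by (rule L_comp_id_left) (rule hom | simp)+
  finally show ?thesis .
qed

lemma brace_hom: assumes "f \<in> Chom X Y" "u \<in> Lhom (Fo X \<otimes>\<^sub>o A) B"
  shows "brace S X A f u \<in> Chom (X \<times>\<^sub>C Uo A) (Y \<times>\<^sub>C Uo B)"
  unfolding brace_def by (rule hom_intros assms | simp)+

lemma D2_brace_snd:
  assumes "f \<in> Chom X Y" "u \<in> Lhom (Fo X \<otimes>\<^sub>o A) B"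
  shows "snd (D2 S X (Uo A) (brace S X A f u \<Zcomp>\<^sub>C \<pi>\<^sub>2 Y (Uo B))) = (Fm (\<pi>\<^sub>1 X (Uo A)) \<otimes> lid A) \<Zcomp> u"
proof -
  let ?b = "brace S X A f u" and ?R = "(X \<times>\<^sub>C Uo A, A)"
    and ?P = "(X \<times>\<^sub>C Uo A, lam S (X \<times>\<^sub>C Uo A))" and ?Q = "(Y \<times>\<^sub>C Uo B, lam S (Y \<times>\<^sub>C Uo B))"
  have b: "?b \<in> Chom (X \<times>\<^sub>C Uo A) (Y \<times>\<^sub>C Uo B)" by (rule brace_hom[OF assms])
  note hom = hom_intros assms b
  have i2A: "i2 S X (Uo A) \<in> LShom S ?R ?P" and i2B: "i2 S Y (Uo B) \<in> LShom S (Y \<times>\<^sub>C Uo B, B) ?Q"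
    using i2_hom[of X "Uo A"] i2_hom[of Y "Uo B"] by simp_all
  have Tb: "Tf S ?b \<in> LShom S ?P ?Q" by (rule Tf_hom[OF b])
  have Tp: "Tf S (\<pi>\<^sub>2 Y (Uo B)) \<in> LShom S ?Q (Uo B, B)"
    using Tf_hom[OF C_snd_hom[OF refl refl], of Y "Uo B"] by simp
  have W: "Wmap S X A f u \<in> LShom S ?R (Y \<times>\<^sub>C Uo B, B)"
    unfolding Wmap_def LShom_iff by (rule conjI, (rule hom | simp add: b[unfolded brace_def])+)+
  have t3: "LScmp S ?R (Wmap S X A f u) (i2 S Y (Uo B)) = LScmp S ?R (i2 S X (Uo A)) (Tf S ?b)"
    using gdsc_axioms(12) assms unfolding t3_ax_def LShom_iff by blast
  have "snd (D2 S X (Uo A) (?b \<Zcomp>\<^sub>C \<pi>\<^sub>2 Y (Uo B)))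
      = snd (LScmp S ?R (LScmp S ?R (i2 S X (Uo A)) (Tf S ?b)) (Tf S (\<pi>\<^sub>2 Y (Uo B))))"
    using D2_snd[of X "Uo A"] Tf_comp[OF b C_snd_hom[OF refl refl]] LScmp_assoc[OF i2A Tb Tp] by simp
  also have "... = snd (LScmp S ?R (Wmap S X A f u) (\<pi>\<^sub>2 Y (Uo B), wk (Y \<times>\<^sub>C Uo B) \<otimes> lid B))"
    unfolding t3[symmetric] LScmp_assoc[OF W i2B Tp] using i2_Tf_snd[of Y "Uo B"] by simp
  also have "... = (Fm (\<pi>\<^sub>1 X (Uo A)) \<otimes> lid A) \<Zcomp> u \<Zcomp> lid B"
    unfolding Wmap_def LScmp_Pair snd_conv by (rule LScmp_wk_snd) (rule hom | simp)+
  also have "... = (Fm (\<pi>\<^sub>1 X (Uo A)) \<otimes> lid A) \<Zcomp> u" by (rule L_comp_id_right) (rule hom | simp)+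
  finally show ?thesis .
qed

lemma brace_term_snd: assumes "v \<in> Lhom B C"
  shows "prodC S (cTrm S) (Uo B) (\<eta> (cTrm S)) (cid (Uo B)) \<Zcomp>\<^sub>C nU S (Fo (cTrm S)) B \<Zcomp>\<^sub>C Um (mF1i S \<otimes> v)
       = \<pi>\<^sub>2 (cTrm S) (Uo B) \<Zcomp>\<^sub>C Um v"
proof -
  note hom = hom_intros assms
  define PE where "PE = prodC S (cTrm S) (Uo B) (\<eta> (cTrm S)) (cid (Uo B))"
  define P2 where "P2 = prodC S (Uo (Fo (cTrm S))) (Uo B) (Um (mF1i S)) (Um v)"
  have PEty: "PE \<in> Chom (cTrm S \<times>\<^sub>C Uo B) (Uo (Fo (cTrm S)) \<times>\<^sub>C Uo B)" unfolding PE_def by (rule hom | simp)+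
  have P2ty: "P2 \<in> Chom (Uo (Fo (cTrm S)) \<times>\<^sub>C Uo B) (Uo (lUnit S) \<times>\<^sub>C Uo C)" unfolding P2_def by (rule hom | simp)+
  note hom = hom PEty P2ty
  have "PE \<Zcomp>\<^sub>C nU S (Fo (cTrm S)) B \<Zcomp>\<^sub>C Um (mF1i S \<otimes> v) = PE \<Zcomp>\<^sub>C (nU S (Fo (cTrm S)) B \<Zcomp>\<^sub>C Um (mF1i S \<otimes> v))"
    by (rule C_comp_assoc) (rule hom | simp)+
  also have "nU S (Fo (cTrm S)) B \<Zcomp>\<^sub>C Um (mF1i S \<otimes> v) = P2 \<Zcomp>\<^sub>C nU S (lUnit S) C"
    unfolding P2_def by (rule nU_natural[symmetric]) (rule hom | simp)+
  also have "PE \<Zcomp>\<^sub>C (P2 \<Zcomp>\<^sub>C nU S (lUnit S) C) = PE \<Zcomp>\<^sub>C P2 \<Zcomp>\<^sub>C nU S (lUnit S) C" by (rule C_comp_assoc[symmetric]) (rule hom | simp)+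
  also have "PE \<Zcomp>\<^sub>C P2 = prodC S (cTrm S) (Uo B) (\<eta> (cTrm S) \<Zcomp>\<^sub>C Um (mF1i S)) (cid (Uo B) \<Zcomp>\<^sub>C Um v)"
    unfolding PE_def P2_def by (rule prodC_comp) (rule hom | simp)+
  also have "... = prodC S (cTrm S) (Uo B) (cid (cTrm S) \<Zcomp>\<^sub>C nU1 S) (Um v \<Zcomp>\<^sub>C cid (Uo C))"
    unfolding eta_term_mF1i
    by (simp add: C_comp_id_left[OF U_hom[OF assms refl refl]] C_comp_id_right[OF U_hom[OF assms refl refl]]
        C_comp_id_left[OF nU1_hom[OF refl refl]])
  also have "... = prodC S (cTrm S) (Uo B) (cid (cTrm S)) (Um v) \<Zcomp>\<^sub>C prodC S (cTrm S) (Uo C) (nU1 S) (cid (Uo C))"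
    by (rule prodC_comp[symmetric]) (rule hom | simp)+
  also have "prodC S (cTrm S) (Uo B) (cid (cTrm S)) (Um v) \<Zcomp>\<^sub>C prodC S (cTrm S) (Uo C) (nU1 S) (cid (Uo C)) \<Zcomp>\<^sub>C nU S (lUnit S) C
     = prodC S (cTrm S) (Uo B) (cid (cTrm S)) (Um v) \<Zcomp>\<^sub>C (prodC S (cTrm S) (Uo C) (nU1 S) (cid (Uo C)) \<Zcomp>\<^sub>C nU S (lUnit S) C)"
    by (rule C_comp_assoc) (rule hom | simp)+
  also have "prodC S (cTrm S) (Uo C) (nU1 S) (cid (Uo C)) \<Zcomp>\<^sub>C nU S (lUnit S) C = \<pi>\<^sub>2 (cTrm S) (Uo C)"
    by (rule nU_unit_left)
  also have "prodC S (cTrm S) (Uo B) (cid (cTrm S)) (Um v) \<Zcomp>\<^sub>C \<pi>\<^sub>2 (cTrm S) (Uo C) = \<pi>\<^sub>2 (cTrm S) (Uo B) \<Zcomp>\<^sub>C Um v"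
    by (rule prodC_snd) (rule hom | simp)+
  finally show ?thesis unfolding PE_def .
qed

lemma Fm_snd_TM_UM:
  assumes "v \<in> Lhom B C"
  shows "(Fm (\<pi>\<^sub>2 (cTrm S) (Uo B)) \<otimes> lid B) \<Zcomp> TM S (Um v) = (Fm (\<pi>\<^sub>1 (cTrm S) (Uo B)) \<otimes> lid B) \<Zcomp> (mF1i S \<otimes> v)"
proof -
  note hom = hom_intros assms
  have u: "mF1i S \<otimes> v \<in> Lhom (Fo (cTrm S) \<otimes>\<^sub>o B) C" by (rule hom | simp)+
  have "brace S (cTrm S) B (cid (cTrm S)) (mF1i S \<otimes> v) \<Zcomp>\<^sub>C \<pi>\<^sub>2 (cTrm S) (Uo C)
      = prodC S (cTrm S) (Uo B) (\<eta> (cTrm S)) (cid (Uo B)) \<Zcomp>\<^sub>C nU S (Fo (cTrm S)) B \<Zcomp>\<^sub>C Um (mF1i S \<otimes> v)"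
    unfolding brace_def by (rule C_pair_snd) (rule hom | simp)+
  also have "... = \<pi>\<^sub>2 (cTrm S) (Uo B) \<Zcomp>\<^sub>C Um v" by (rule brace_term_snd[OF assms])
  finally have "brace S (cTrm S) B (cid (cTrm S)) (mF1i S \<otimes> v) \<Zcomp>\<^sub>C \<pi>\<^sub>2 (cTrm S) (Uo C) = \<pi>\<^sub>2 (cTrm S) (Uo B) \<Zcomp>\<^sub>C Um v" .
  with D2_brace_snd[OF C_id_hom[OF refl refl] u] D2_snd_comp[of "Um v" "Uo B" "Uo C" "cTrm S"]
  show ?thesis by (simp add: U_hom[OF assms refl refl])
qed

lemma TM_UM: assumes "v \<in> Lhom B C" shows "TM S (Um v) = wk (Uo B) \<otimes> v"
proof -
  let ?q = "(mF1 S \<otimes> lid (Fo (Uo B))) \<Zcomp> mF S (cTrm S) (Uo B)"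
    and ?p1 = "Fm (\<pi>\<^sub>1 (cTrm S) (Uo B))" and ?p2 = "Fm (\<pi>\<^sub>2 (cTrm S) (Uo B))"
  \<comment> \<open>By the left unit axiom of \<open>mF\<close>, \<open>?q\<close> is a section of \<open>?p2\<close>; it cancels the projection\<close>
  have q: "?q \<in> Lhom (Fo (Uo B)) (Fo (cTrm S \<times>\<^sub>C Uo B))" by (rule hom_intros | simp)+
  note hom = hom_intros assms q
  have "TM S (Um v) = ((?q \<Zcomp> ?p2) \<otimes> (lid B \<Zcomp> lid B)) \<Zcomp> TM S (Um v)"
    unfolding mF_unit_left L_comp_id_left[OF L_id_hom[OF refl refl]] L_tensor_id
    by (rule L_comp_id_left[symmetric]) (rule hom | simp)+
  also have "... = (?q \<otimes> lid B) \<Zcomp> ((?p2 \<otimes> lid B) \<Zcomp> TM S (Um v))"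
    by (subst L_interchange, (rule hom | simp)+, rule L_comp_assoc) (rule hom | simp)+
  also have "... = (?q \<otimes> lid B) \<Zcomp> ((?p1 \<otimes> lid B) \<Zcomp> (mF1i S \<otimes> v))"
    unfolding Fm_snd_TM_UM[OF assms] ..
  also have "... = (?q \<Zcomp> ?p1 \<Zcomp> mF1i S) \<otimes> (lid B \<Zcomp> lid B \<Zcomp> v)"
    by (subst L_interchange, (rule hom | simp)+, subst L_interchange, (rule hom | simp)+)
      (rule L_comp_assoc[symmetric]; (rule hom | simp)+)
  also have "... = wk (Uo B) \<otimes> v"
    unfolding mF_unit_left_wk L_comp_id_left[OF L_id_hom[OF refl refl]] L_comp_id_left[OF assms] ..
  finally show ?thesis .
qed

lemma TM_eta_chain_rule:
  "TM S (\<eta> (Uo A)) \<Zcomp> Fm (\<eta> (Uo A))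
   = (ctr (Uo A) \<otimes> lid A) \<Zcomp> (Fm (\<eta> (Uo A)) \<otimes> TM S (\<eta> (Uo A))) \<Zcomp> TM S (\<eta> (Uo (Fo (Uo A))))"
proof -
  let ?e = "\<eta> (Uo A)"
  have e: "?e \<in> Chom (Uo A) (Uo (Fo (Uo A)))" by (rule eta_hom) simp_all
  have Fe: "Fm ?e \<in> Lhom (Fo (Uo A)) (Fo (Uo (Fo (Uo A))))" by (rule F_hom[OF e]) simp_all
  have "TM S (?e \<Zcomp>\<^sub>C Um (Fm ?e))
      = (ctr (Uo A) \<otimes> lid A) \<Zcomp> (Fm ?e \<otimes> TM S ?e) \<Zcomp> (wk (Uo (Fo (Uo A))) \<otimes> Fm ?e)"
    using TM_comp[OF e U_hom[OF Fe refl refl]] TM_UM[OF Fe] by simp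
  also have "... = TM S ?e \<Zcomp> Fm ?e" by (rule LScmp_wk_snd) (rule hom_intros e | simp)+
  finally show ?thesis
    using TM_comp[OF e eta_hom[OF refl refl]] eta_natural[OF e] by simp
qed

section \<open>The deriving transform\<close>

lemma SigmaX_muX_const:
  assumes "g \<in> Lhom (Fo (Uo A) \<otimes>\<^sub>o B) C" "snd h = (Fm (\<pi>\<^sub>2 X (Uo A)) \<otimes> lid B) \<Zcomp> g"
  shows "LScmp S (X, bangL S A \<otimes>\<^sub>o B) (SigmaX S X A B h) (muX S X A C) = (cid X, wk X \<otimes> g)"
proof -
  let ?FA = "Fo (Uo A)" and ?G = "wk X \<otimes> g"
  let ?a = "((lid (Fo X) \<otimes> ctr (Uo A)) \<otimes> lid B) \<Zcomp> (lSym S (Fo X) ?FA \<otimes> lid (?FA \<otimes>\<^sub>o B))"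
  have G: "?G \<in> Lhom (Fo X \<otimes>\<^sub>o ?FA \<otimes>\<^sub>o B) C"
    and a: "?a \<in> Lhom (Fo X \<otimes>\<^sub>o ?FA \<otimes>\<^sub>o B) (?FA \<otimes>\<^sub>o Fo X \<otimes>\<^sub>o ?FA \<otimes>\<^sub>o B)"
    by (rule hom_intros assms | simp)+
  note hom = hom_intros assms(1) G a
  have sigma: "SigmaX S X A B h = (cid X, ?a \<Zcomp> (lid ?FA \<otimes> ?G))"
    unfolding SigmaX_def bangL_def assms(2) mF_snd_whisker[OF assms(1)] by simp
  have "snd (LScmp S (X, bangL S A \<otimes>\<^sub>o B) (SigmaX S X A B h) (muX S X A C))
      = (ctr X \<otimes> lid (?FA \<otimes>\<^sub>o B)) \<Zcomp> (Fm (cid X) \<otimes> (?a \<Zcomp> (lid ?FA \<otimes> ?G))) \<Zcomp> (wk X \<otimes> wk (Uo A) \<otimes> lid C)"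
    unfolding muX_def LScmp_Pair sigma bangL_def
    by (simp add: L_tensor_assoc[OF wk_hom[OF refl refl] wk_hom[OF refl refl] L_id_hom[OF refl refl]])
  also have "... = ?a \<Zcomp> ((lid ?FA \<otimes> ?G) \<Zcomp> (wk (Uo A) \<otimes> lid C))"
    by (subst LScmp_wk_snd, (rule hom | simp)+, rule L_comp_assoc) (rule hom | simp)+
  also have "(lid ?FA \<otimes> ?G) \<Zcomp> (wk (Uo A) \<otimes> lid C) = (wk (Uo A) \<otimes> lid (Fo X \<otimes>\<^sub>o ?FA \<otimes>\<^sub>o B)) \<Zcomp> ?G"
    by (subst L_interchange[symmetric], (rule hom | simp)+)
      (simp add: L_comp_id_left[OF wk_hom[OF refl refl]] L_comp_id_right[OF G] L_tensor_absorb_left[OF wk_hom[OF refl refl] G])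
  also have "?a \<Zcomp> ((wk (Uo A) \<otimes> lid (Fo X \<otimes>\<^sub>o ?FA \<otimes>\<^sub>o B)) \<Zcomp> ?G) = ?G"
    by (subst L_comp_assoc[symmetric], (rule hom | simp)+)
      (simp add: ctr_sym_wk_cancel L_comp_id_left[OF G])
  finally show ?thesis
    unfolding sigma muX_def LScmp_Pair using C_comp_id_left[OF C_id_hom[OF refl refl]] by simp
qed

lemma derX_eq: "derX S X A = (cid X, wk X \<otimes> TM S (\<eta> (Uo A)))"
  unfolding derX_def
proof (rule SigmaX_muX_const)
  show "TM S (\<eta> (Uo A)) \<in> Lhom (Fo (Uo A) \<otimes>\<^sub>o A) (bangL S A)"
    unfolding bangL_def by (rule hom_intros | simp)+
  show "snd (scrD S X A) = (Fm (\<pi>\<^sub>2 X (Uo A)) \<otimes> lid A) \<Zcomp> TM S (\<eta> (Uo A))"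
    unfolding scrD_def using D2_snd_comp[OF eta_hom[OF refl refl], of X "Uo A"] by simp
qed

end

theorem proposition4p32:
  fixes S :: "('c,'f,'l,'g) gdsc_data" and X :: 'c and A :: 'l
  assumes "GDSC S"
  shows "LScmp S (X, lTen S (bangL S A) A) (derX S X A) (digX S X A)
       = LScmp S (X, lTen S (bangL S A) A)
           (LScmp S (X, lTen S (bangL S A) A)
              (tenX S X (bangL S A) A (contrX S X A) (LSid S (X, A)))
              (tenX S X (bangL S A) (lTen S (bangL S A) A) (digX S X A) (derX S X A)))
           (derX S X (bangL S A))"
proof -
  interpret gdsc S by (rule gdsc.intro) (rule assms)
  let ?d = "TM S (\<eta> (Uo A))" and ?p = "Fm (\<eta> (Uo A))" and ?c = "ctr (Uo A)"
    and ?d' = "TM S (\<eta> (Uo (Fo (Uo A))))"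
  have d: "?d \<in> Lhom (Fo (Uo A) \<otimes>\<^sub>o A) (Fo (Uo A))"
    and p: "?p \<in> Lhom (Fo (Uo A)) (Fo (Uo (Fo (Uo A))))"
    and c: "?c \<in> Lhom (Fo (Uo A)) (Fo (Uo A) \<otimes>\<^sub>o Fo (Uo A))"
    and d': "?d' \<in> Lhom (Fo (Uo (Fo (Uo A))) \<otimes>\<^sub>o Fo (Uo A)) (Fo (Uo (Fo (Uo A))))"
    and c_id: "?c \<otimes> lid A \<in> Lhom (Fo (Uo A) \<otimes>\<^sub>o A) (Fo (Uo A) \<otimes>\<^sub>o Fo (Uo A) \<otimes>\<^sub>o A)"
    and p_d: "?p \<otimes> ?d \<in> Lhom (Fo (Uo A) \<otimes>\<^sub>o Fo (Uo A) \<otimes>\<^sub>o A) (Fo (Uo (Fo (Uo A))) \<otimes>\<^sub>o Fo (Uo A))"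
    by (rule hom_intros | simp)+
  have const: "derX S X A = (cid X, wk X \<otimes> ?d)" "digX S X A = (cid X, wk X \<otimes> ?p)"
    "contrX S X A = (cid X, wk X \<otimes> ?c)" "LSid S (X, A) = (cid X, wk X \<otimes> lid A)"
    "derX S X (Fo (Uo A)) = (cid X, wk X \<otimes> ?d')"
    by (simp_all add: derX_eq digX_def digL_def contrX_def LSid_def)
  show ?thesis
    unfolding const bangL_def LScmp_wk_const[OF d p] tenX_wk_const[OF c L_id_hom[OF refl refl]]
      tenX_wk_const[OF p d] LScmp_wk_const[OF c_id p_d] LScmp_wk_const[OF L_comp_hom[OF c_id p_d refl refl refl] d']
      TM_eta_chain_rule
    by simp
qed

end
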